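(* Let $G$ be a copious graph on $[n]$ which has a universal vertex. Then $G$ is topologically copious.
   Context: Setup. $G\subseteq\binom{[n]}{2}$ is a simple graph, $n\ge4$, and $G_i$ is the set of neighbours of $i$. A vertex is universal if it is adjacent to all other vertices. The kinematic space $\mathcal K_G\subseteq\mathbb C^{|G|}$ (also in $\mathbb P^{|G|-1}$) is defined by $\sum_{j\in G_i}s_{ij}=0$ for $i\in[n]$, and $\kappa(G)$ is its codimension. $\mathcal H=\bigcup_{i<j}\{x_i=x_j\}$. $\mathcal M_{0,n}$ is the moduli space of $n$ distinct points on $\mathbb P^1$ modulo $\mathrm{PGL}(2)$ (action $x_i\mapsto(ax_i+b)/(cx_i+d)$). Copious. The scattering correspondence is $$\mathcal V_G=\{(s,x)\in\mathbb P^{|G|-1}\times(\mathbb P^{n-1}\setminus\mathcal H): s\in\mathcal K_G,\ \textstyle\sum_{j\in G_i}s_{ij}/(x_i-x_j)=0\ \forall i\},$$ with projections $\mathcal K_G\leftarrow\mathcal V_G\to\mathcal M_{0,n}$ (an $x$-solution orbit is a point of $\mathcal M_{0,n}$). $G$ is copious if $\mathcal V_G\to\mathcal M_{0,n}$ is dominant and the generic fiber of $\mathcal V_G\to\mathcal K_G$ has dimension two in $\mathbb P^{n-1}$ (modulo $\mathrm{PGL}(2)$ it is finite-to-one). Topologically copious. The kinematic lattice $\Lambda_G=\mathcal K_G\cap\mathbb Z^{|G|}$ has rank $r=|G|-\kappa(G)$. For $u\in\Lambda_G$ set $\tilde u(x)=\prod_{ij\in G,\,i<j}(x_i-x_j)^{u_{ij}}$,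 a $\mathrm{PGL}(2)$-invariant regular function on $\mathcal M_{0,n}$. For a $\mathbb Z$-basis $u_1,\dots,u_r$, $\Phi_G:\mathcal M_{0,n}\to(\mathbb C^* )^r$ is $x\mapsto(\tilde u_k(x))_k$. $G$ is topologically copious if $\Phi_G$ is an embedding (an isomorphism onto its image). *)

theory Defs
  imports Complex_Main
begin

inductive_set polyfun :: "(('v \<Rightarrow> complex) \<Rightarrow> complex) set" where
  pconst: "(\<lambda>_. c) \<in> polyfun"
| pvar:   "(\<lambda>x. x v) \<in> polyfun"
| padd:   "p \<in> polyfun \<Longrightarrow> q \<in> polyfun \<Longrightarrow> (\<lambda>x. p x + q x) \<in> polyfun"
| pmult:  "p \<in> polyfun \<Longrightarrow> q \<in> polyfun \<Longrightarrow> (\<lambda>x. p x * q x) \<in> polyfun"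

definition zariski_dense_in :: "('v \<Rightarrow> complex) set \<Rightarrow> ('v \<Rightarrow> complex) set \<Rightarrow> bool" where
  "zariski_dense_in X Y \<longleftrightarrow> (\<forall>p\<in>polyfun. (\<forall>x\<in>X. p x = 0) \<longrightarrow> (\<forall>y\<in>Y. p y = 0))"

text \<open>A property holds for generic points of the (irreducible) set K:
  on a nonempty Zariski-open subset of K.  Nonzero points only (projective).\<close>
definition generic_on :: "('v \<Rightarrow> complex) set \<Rightarrow> (('v \<Rightarrow> complex) \<Rightarrow> bool) \<Rightarrow> bool" where
  "generic_on K P \<longleftrightarrow> (\<exists>p\<in>polyfun. (\<exists>s\<in>K. p s \<noteq> 0) \<and>
      (\<forall>s\<in>K. (\<exists>v. s v \<noteq> 0) \<longrightarrow> p s \<noteq> 0 \<longrightarrow> P s))"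

text \<open>Edges are pairs (i,j) with i < j.\<close>
definition edge :: "nat \<Rightarrow> nat \<Rightarrow> nat \<times> nat" where
  "edge i j = (min i j, max i j)"

definition simple_graph :: "nat \<Rightarrow> (nat \<times> nat) set \<Rightarrow> bool" where
  "simple_graph n G \<longleftrightarrow> G \<subseteq> {(i, j). i < j \<and> j < n}"

definition nbrs :: "nat \<Rightarrow> (nat \<times> nat) set \<Rightarrow> nat \<Rightarrow> nat set" where
  "nbrs n G i = {j. j < n \<and> j \<noteq> i \<and> edge i j \<in> G}"

definition universal_vertex :: "nat \<Rightarrow> (nat \<times> nat) set \<Rightarrow> nat \<Rightarrow> bool" where
  "universal_vertex n G v \<longleftrightarrow> v < n \<and> (\<forall>j<n. j \<noteq> v \<longrightarrow> edge v j \<in> G)"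

definition kin_space :: "nat \<Rightarrow> (nat \<times> nat) set \<Rightarrow> (nat \<times> nat \<Rightarrow> complex) set" where
  "kin_space n G = {s. (\<forall>e. e \<notin> G \<longrightarrow> s e = 0) \<and>
      (\<forall>i<n. (\<Sum>j\<in>nbrs n G i. s (edge i j)) = 0)}"

definition kin_lattice :: "nat \<Rightarrow> (nat \<times> nat) set \<Rightarrow> (nat \<times> nat \<Rightarrow> int) set" where
  "kin_lattice n G = {u. (\<forall>e. e \<notin> G \<longrightarrow> u e = 0) \<and>
      (\<forall>i<n. (\<Sum>j\<in>nbrs n G i. u (edge i j)) = 0)}"

text \<open>Configurations of n distinct points of the affine line (the complement of H);
  coordinates beyond n are set to 0.\<close>
definition conf :: "nat \<Rightarrow> (nat \<Rightarrow> complex) set" where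
  "conf n = {x. (\<forall>i<n. \<forall>j<n. i \<noteq> j \<longrightarrow> x i \<noteq> x j) \<and> (\<forall>i\<ge>n. x i = 0)}"

text \<open>Two configurations give the same point of M_{0,n} iff related by PGL(2).\<close>
definition mob_equiv :: "nat \<Rightarrow> (nat \<Rightarrow> complex) \<Rightarrow> (nat \<Rightarrow> complex) \<Rightarrow> bool" where
  "mob_equiv n x y \<longleftrightarrow> (\<exists>a b c d. a * d - b * c \<noteq> 0 \<and>
      (\<forall>i<n. c * x i + d \<noteq> 0 \<and> y i = (a * x i + b) / (c * x i + d)))"

definition mob_class :: "nat \<Rightarrow> (nat \<Rightarrow> complex) \<Rightarrow> (nat \<Rightarrow> complex) set" where
  "mob_class n x = {y \<in> conf n. mob_equiv n x y}"

text \<open>Cross-ratio; these functions generate the coordinate ring of M_{0,n}.\<close>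
definition cross_ratio :: "nat \<Rightarrow> nat \<Rightarrow> nat \<Rightarrow> nat \<Rightarrow> (nat \<Rightarrow> complex) \<Rightarrow> complex" where
  "cross_ratio i j k l x = ((x i - x k) * (x j - x l)) / ((x i - x l) * (x j - x k))"

definition scat_eqs :: "nat \<Rightarrow> (nat \<times> nat) set \<Rightarrow> (nat \<times> nat \<Rightarrow> complex) \<Rightarrow> (nat \<Rightarrow> complex) \<Rightarrow> bool" where
  "scat_eqs n G s x \<longleftrightarrow> (\<forall>i<n. (\<Sum>j\<in>nbrs n G i. s (edge i j) / (x i - x j)) = 0)"

definition scat_fiber :: "nat \<Rightarrow> (nat \<times> nat) set \<Rightarrow> (nat \<times> nat \<Rightarrow> complex) \<Rightarrow> (nat \<Rightarrow> complex) set" where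
  "scat_fiber n G s = {x \<in> conf n. scat_eqs n G s x}"

definition scat_image :: "nat \<Rightarrow> (nat \<times> nat) set \<Rightarrow> (nat \<Rightarrow> complex) set" where
  "scat_image n G = {x \<in> conf n. \<exists>s\<in>kin_space n G. (\<exists>e. s e \<noteq> 0) \<and> scat_eqs n G s x}"

definition copious :: "nat \<Rightarrow> (nat \<times> nat) set \<Rightarrow> bool" where
  "copious n G \<longleftrightarrow>
     zariski_dense_in (scat_image n G) (conf n) \<and>
     generic_on (kin_space n G)
       (\<lambda>s. scat_fiber n G s \<noteq> {} \<and> finite (mob_class n ` scat_fiber n G s))"

definition is_lattice_basis :: "nat \<Rightarrow> (nat \<times> nat) set \<Rightarrow> nat \<Rightarrow> (nat \<Rightarrow> nat \<times> nat \<Rightarrow> int) \<Rightarrow> bool" where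
  "is_lattice_basis n G r u \<longleftrightarrow>
     (\<forall>k<r. u k \<in> kin_lattice n G) \<and>
     (\<forall>v\<in>kin_lattice n G. \<exists>c :: nat \<Rightarrow> int. v = (\<lambda>e. \<Sum>k<r. c k * u k e)) \<and>
     (\<forall>c :: nat \<Rightarrow> int. (\<forall>e. (\<Sum>k<r. c k * u k e) = 0) \<longrightarrow> (\<forall>k<r. c k = 0))"

definition utilde :: "(nat \<times> nat) set \<Rightarrow> (nat \<times> nat \<Rightarrow> int) \<Rightarrow> (nat \<Rightarrow> complex) \<Rightarrow> complex" where
  "utilde G u x = (\<Prod>e\<in>G. (x (fst e) - x (snd e)) powi u e)"

definition Phi :: "(nat \<times> nat) set \<Rightarrow> nat \<Rightarrow> (nat \<Rightarrow> nat \<times> nat \<Rightarrow> int) \<Rightarrow> (nat \<Rightarrow> complex) \<Rightarrow> (nat \<Rightarrow> complex)" where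
  "Phi G r u x = (\<lambda>k. if k < r then utilde G (u k) x else 0)"

definition torus :: "nat \<Rightarrow> (nat \<Rightarrow> complex) set" where
  "torus r = {z. (\<forall>k<r. z k \<noteq> 0) \<and> (\<forall>k\<ge>r. z k = 0)}"

definition locally_closed_in_torus :: "nat \<Rightarrow> (nat \<Rightarrow> complex) set \<Rightarrow> bool" where
  "locally_closed_in_torus r Z \<longleftrightarrow> (\<exists>F H. F \<subseteq> polyfun \<and> H \<subseteq> polyfun \<and> finite H \<and>
      Z = {z \<in> torus r. (\<forall>f\<in>F. f z = 0) \<and> (\<exists>h\<in>H. h z \<noteq> 0)})"

text \<open>Phi : M_{0,n} -> (C^*)^r is an isomorphism onto its image: it is injective on
  M_{0,n}, its image is a locally closed subvariety, and the inverse map is regular,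
  i.e. every cross-ratio, transported to the image, is locally a quotient of polynomials.\<close>
definition embedding_M0n :: "nat \<Rightarrow> nat \<Rightarrow> ((nat \<Rightarrow> complex) \<Rightarrow> (nat \<Rightarrow> complex)) \<Rightarrow> bool" where
  "embedding_M0n n r F \<longleftrightarrow>
     (\<forall>x\<in>conf n. \<forall>y\<in>conf n. F x = F y \<longrightarrow> mob_equiv n x y) \<and>
     locally_closed_in_torus r (F ` conf n) \<and>
     (\<forall>i j k l. i < n \<longrightarrow> j < n \<longrightarrow> k < n \<longrightarrow> l < n \<longrightarrow> distinct [i, j, k, l] \<longrightarrow>
        (\<forall>z\<in>F ` conf n. \<exists>p\<in>polyfun. \<exists>q\<in>polyfun. q z \<noteq> 0 \<and>
           (\<forall>x\<in>conf n. q (F x) \<noteq> 0 \<longrightarrow> cross_ratio i j k l x * q (F x) = p (F x))))"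

definition top_copious :: "nat \<Rightarrow> (nat \<times> nat) set \<Rightarrow> bool" where
  "top_copious n G \<longleftrightarrow>
     (\<forall>r u. is_lattice_basis n G r u \<longrightarrow> embedding_M0n n r (Phi G r u))"

end

theory Submission
  imports Defs "HOL-Library.Indicator_Function"
begin

text \<open>Let \<open>v\<close> be the universal vertex and put \<open>y\<^sub>a = 1 / (x\<^sub>a - x\<^sub>v)\<close>, a Moebius change of
  coordinates sending \<open>x\<^sub>v\<close> to infinity. For an edge \<open>ab\<close> of \<open>G - v\<close> the vector
  \<open>e\<^sub>a\<^sub>b - e\<^sub>a\<^sub>v - e\<^sub>b\<^sub>v\<close> has row sums supported at \<open>v\<close>; the differences of two such
  vectors span the kinematic lattice, and their monomials are \<open>\<plusminus>(y\<^sub>a - y\<^sub>b) / (y\<^sub>c - y\<^sub>d)\<close>.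
  Copiousness forces \<open>G - v\<close> to be connected: otherwise translating the \<open>y\<close> of one
  component preserves the scattering equations and yields infinitely many solutions up to
  Moebius maps. Summing along paths, every ratio \<open>(y\<^sub>a - y\<^sub>b) / (y\<^sub>c - y\<^sub>d)\<close> is then a Laurent
  polynomial in the coordinates of \<open>\<Phi>\<close>. These ratios determine a configuration up to
  Moebius maps and give the cross-ratios, and the image of \<open>\<Phi>\<close> is cut out by the edge
  relations between them together with their nonvanishing; hence \<open>\<Phi>\<close> is an embedding.\<close>

section \<open>Polynomial and Laurent polynomial functions\<close>

lemma polyfun_power: "p \<in> polyfun \<Longrightarrow> (\<lambda>x. p x ^ N) \<in> polyfun"
  by (induction N) (auto intro: polyfun.intros)

lemma polyfun_prod:
  "finite S \<Longrightarrow> (\<And>k. k \<in> S \<Longrightarrow> f k \<in> polyfun) \<Longrightarrow> (\<lambda>x. \<Prod>k\<in>S. f k x) \<in> polyfun"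
  by (induction S rule: finite_induct) (auto intro: polyfun.intros)

lemma isCont_polyfun_scaled: "p \<in> polyfun \<Longrightarrow> isCont (\<lambda>t::complex. p (\<lambda>e. t * s e)) a"
  by (induction p rule: polyfun.induct) (auto intro!: continuous_intros)

lemma power_int_sum:
  fixes X :: "'a::field"
  assumes "finite I" "X \<noteq> 0"
  shows "X powi (\<Sum>i\<in>I. f i) = (\<Prod>i\<in>I. X powi f i)"
  using assms by (induction I rule: finite_induct) (simp_all add: power_int_add)

lemma prod_power_int_distrib:
  fixes f :: "_ \<Rightarrow> 'a::field"
  shows "finite I \<Longrightarrow> (\<Prod>i\<in>I. f i) powi c = (\<Prod>i\<in>I. f i powi c)"
  by (induction I rule: finite_induct) (auto simp: power_int_mult_distrib)

definition coord_prod :: "nat \<Rightarrow> (nat \<Rightarrow> complex) \<Rightarrow> complex" where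
  "coord_prod r z = (\<Prod>k<r. z k)"

definition laurent :: "nat \<Rightarrow> ((nat \<Rightarrow> complex) \<Rightarrow> complex) set" where
  "laurent r = {f. \<exists>p\<in>polyfun. \<exists>N. \<forall>z\<in>torus r. f z * coord_prod r z ^ N = p z}"

lemma coord_prod_polyfun: "coord_prod r \<in> polyfun"
  unfolding coord_prod_def[abs_def] by (rule polyfun_prod) (auto intro: polyfun.pvar)

lemma coord_prod_nonzero: "z \<in> torus r \<Longrightarrow> coord_prod r z \<noteq> 0"
  by (auto simp: coord_prod_def torus_def)

lemma laurentI: "p \<in> polyfun \<Longrightarrow> (\<And>z. z \<in> torus r \<Longrightarrow> f z * coord_prod r z ^ N = p z) \<Longrightarrow> f \<in> laurent r"
  unfolding laurent_def by blast

lemma laurentE: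
  assumes "f \<in> laurent r"
  obtains p N where "p \<in> polyfun" "\<And>z. z \<in> torus r \<Longrightarrow> f z * coord_prod r z ^ N = p z"
  using assms unfolding laurent_def by auto

lemma polyfun_imp_laurent: "p \<in> polyfun \<Longrightarrow> p \<in> laurent r"
  by (rule laurentI[where N = 0]) auto

lemma laurent_const: "(\<lambda>_. c) \<in> laurent r"
  by (rule polyfun_imp_laurent[OF polyfun.pconst])

lemma laurent_var: "(\<lambda>z. z k) \<in> laurent r"
  by (rule polyfun_imp_laurent[OF polyfun.pvar])

lemma laurent_add:
  assumes "f \<in> laurent r" "g \<in> laurent r"
  shows "(\<lambda>z. f z + g z) \<in> laurent r"
proof -
  obtain p N where p: "p \<in> polyfun" "\<And>z. z \<in> torus r \<Longrightarrow> f z * coord_prod r z ^ N = p z"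
    using assms(1) by (elim laurentE) blast
  obtain q M where q: "q \<in> polyfun" "\<And>z. z \<in> torus r \<Longrightarrow> g z * coord_prod r z ^ M = q z"
    using assms(2) by (elim laurentE) blast
  show ?thesis
  proof (rule laurentI[where N = "N + M"])
    show "(\<lambda>z. p z * coord_prod r z ^ M + q z * coord_prod r z ^ N) \<in> polyfun"
      by (intro polyfun.intros polyfun_power p q coord_prod_polyfun)
    fix z assume "z \<in> torus r"
    then show "(f z + g z) * coord_prod r z ^ (N + M) = p z * coord_prod r z ^ M + q z * coord_prod r z ^ N"
      by (simp flip: p(2) q(2) add: power_add algebra_simps)
  qed
qed

lemma laurent_mult:
  assumes "f \<in> laurent r" "g \<in> laurent r"
  shows "(\<lambda>z. f z * g z) \<in> laurent r"
proof -
  obtain p N where p: "p \<in> polyfun" "\<And>z. z \<in> torus r \<Longrightarrow> f z * coord_prod r z ^ N = p z"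
    using assms(1) by (elim laurentE) blast
  obtain q M where q: "q \<in> polyfun" "\<And>z. z \<in> torus r \<Longrightarrow> g z * coord_prod r z ^ M = q z"
    using assms(2) by (elim laurentE) blast
  show ?thesis
  proof (rule laurentI[where N = "N + M"])
    show "(\<lambda>z. p z * q z) \<in> polyfun" by (intro polyfun.intros p q)
    fix z assume "z \<in> torus r"
    then show "(f z * g z) * coord_prod r z ^ (N + M) = p z * q z"
      by (simp flip: p(2) q(2) add: power_add algebra_simps)
  qed
qed

lemma laurent_diff: "f \<in> laurent r \<Longrightarrow> g \<in> laurent r \<Longrightarrow> (\<lambda>z. f z - g z) \<in> laurent r"
  using laurent_add[OF _ laurent_mult[OF laurent_const[of "-1"]], of f r g] by simp

lemma laurent_power: "f \<in> laurent r \<Longrightarrow> (\<lambda>z. f z ^ N) \<in> laurent r"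
  by (induction N) (auto intro: laurent_const laurent_mult)

lemma laurent_prod:
  "finite S \<Longrightarrow> (\<And>k. k \<in> S \<Longrightarrow> f k \<in> laurent r) \<Longrightarrow> (\<lambda>z. \<Prod>k\<in>S. f k z) \<in> laurent r"
  by (induction S rule: finite_induct) (auto intro: laurent_const laurent_mult)

lemma laurent_inverse_var:
  assumes "k < r"
  shows "(\<lambda>z. inverse (z k)) \<in> laurent r"
proof (rule laurentI[where N = 1])
  show "(\<lambda>z. \<Prod>j\<in>{..<r} - {k}. z j) \<in> polyfun" by (rule polyfun_prod) (auto intro: polyfun.pvar)
  fix z assume z: "z \<in> torus r"
  have "coord_prod r z = z k * (\<Prod>j\<in>{..<r} - {k}. z j)"
    unfolding coord_prod_def using assms by (subst prod.remove[of _ k]) auto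
  moreover have "z k \<noteq> 0" using z assms by (auto simp: torus_def)
  ultimately show "inverse (z k) * coord_prod r z ^ 1 = (\<Prod>j\<in>{..<r} - {k}. z j)" by simp
qed

lemma laurent_power_int_var:
  assumes "k < r"
  shows "(\<lambda>z. z k powi c) \<in> laurent r"
proof (cases "c \<ge> 0")
  case True
  then have "(\<lambda>z::nat\<Rightarrow>complex. z k powi c) = (\<lambda>z. z k ^ nat c)"
    by (simp add: power_int_def)
  then show ?thesis using laurent_power[OF laurent_var[of k r], of "nat c"] by simp
next
  case False
  then have "(\<lambda>z::nat\<Rightarrow>complex. z k powi c) = (\<lambda>z. inverse (z k) ^ nat (-c))"
    by (simp add: power_int_def power_inverse)
  then show ?thesis using laurent_power[OF laurent_inverse_var[OF assms], of "nat (-c)"] by simp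
qed

lemma laurent_zero_set_polyfun:
  assumes "f \<in> laurent r"
  obtains p where "p \<in> polyfun" "\<And>z. z \<in> torus r \<Longrightarrow> f z = 0 \<longleftrightarrow> p z = 0"
proof -
  obtain p N where p: "p \<in> polyfun" "\<And>z. z \<in> torus r \<Longrightarrow> f z * coord_prod r z ^ N = p z"
    using assms by (elim laurentE) blast
  show ?thesis
    by (rule that[OF p(1)]) (use p(2) coord_prod_nonzero in \<open>fastforce\<close>)
qed

lemma laurent_quotient_imp_polyfun_quotient:
  assumes A: "A \<in> laurent r" and B: "B \<in> laurent r" and tor: "\<And>x. x \<in> X \<Longrightarrow> F x \<in> torus r"
    and eq: "\<And>x. x \<in> X \<Longrightarrow> f x * B (F x) = A (F x)" and nz: "\<And>x. x \<in> X \<Longrightarrow> B (F x) \<noteq> 0"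
  shows "\<exists>p\<in>polyfun. \<exists>q\<in>polyfun. \<forall>x\<in>X. f x * q (F x) = p (F x) \<and> q (F x) \<noteq> 0"
proof -
  obtain pA NA where pA: "pA \<in> polyfun" "\<And>z. z \<in> torus r \<Longrightarrow> A z * coord_prod r z ^ NA = pA z"
    using A by (elim laurentE) blast
  obtain pB NB where pB: "pB \<in> polyfun" "\<And>z. z \<in> torus r \<Longrightarrow> B z * coord_prod r z ^ NB = pB z"
    using B by (elim laurentE) blast
  define p where "p z = pA z * coord_prod r z ^ NB" for z
  define q where "q z = pB z * coord_prod r z ^ NA" for z
  have "p \<in> polyfun" "q \<in> polyfun"
    unfolding p_def[abs_def] q_def[abs_def]
    by (intro polyfun.intros polyfun_power coord_prod_polyfun pA(1) pB(1))+
  moreover have "f x * q (F x) = p (F x) \<and> q (F x) \<noteq> 0" if x: "x \<in> X" for x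
    using eq[OF x] nz[OF x] coord_prod_nonzero[OF tor[OF x]]
    by (simp add: p_def q_def flip: pA(2)[OF tor[OF x]] pB(2)[OF tor[OF x]] add: ac_simps)
  ultimately show ?thesis by blast
qed

definition torus_monomial :: "nat \<Rightarrow> (nat \<Rightarrow> int) \<Rightarrow> (nat \<Rightarrow> complex) \<Rightarrow> complex" where
  "torus_monomial r c z = (\<Prod>k<r. z k powi c k)"

lemma laurent_torus_monomial: "torus_monomial r c \<in> laurent r"
  unfolding torus_monomial_def[abs_def] by (rule laurent_prod) (auto intro: laurent_power_int_var)

lemma torus_monomial_cong: "(\<And>k. k < r \<Longrightarrow> c k = c' k) \<Longrightarrow> torus_monomial r c z = torus_monomial r c' z"
  unfolding torus_monomial_def by (rule prod.cong) auto

lemma torus_monomial_zero: "(\<And>k. k < r \<Longrightarrow> c k = 0) \<Longrightarrow> torus_monomial r c z = 1"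
  unfolding torus_monomial_def by simp

lemma torus_monomial_unit:
  assumes "k < r"
  shows "torus_monomial r (\<lambda>j. if j = k then 1 else 0) z = z k"
proof -
  have "torus_monomial r (\<lambda>j. if j = k then 1 else 0) z = (\<Prod>j<r. if j = k then z k else 1)"
    unfolding torus_monomial_def by (rule prod.cong) auto
  then show ?thesis using assms by simp
qed

lemma prod_power_int_torus_monomial:
  assumes "finite S" "z \<in> torus r"
  shows "(\<Prod>e\<in>S. torus_monomial r (c e) z powi m e) = torus_monomial r (\<lambda>k. \<Sum>e\<in>S. m e * c e k) z"
proof -
  have "z k powi (\<Sum>e\<in>S. m e * c e k) = (\<Prod>e\<in>S. (z k powi c e k) powi m e)" if "k < r" for k
    using assms that
    by (simp add: power_int_sum torus_def mult.commute[of "m _"] power_int_mult)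
  then have "torus_monomial r (\<lambda>k. \<Sum>e\<in>S. m e * c e k) z = (\<Prod>k<r. \<Prod>e\<in>S. (z k powi c e k) powi m e)"
    unfolding torus_monomial_def by (intro prod.cong) auto
  also have "\<dots> = (\<Prod>e\<in>S. torus_monomial r (c e) z powi m e)"
    unfolding torus_monomial_def by (subst prod.swap) (simp add: prod_power_int_distrib)
  finally show ?thesis by simp
qed

section \<open>Monomials, cross-ratios and the scattering equations\<close>

definition separates_edges :: "(nat \<times> nat) set \<Rightarrow> (nat \<Rightarrow> complex) \<Rightarrow> bool" where
  "separates_edges G x \<longleftrightarrow> (\<forall>e\<in>G. x (fst e) \<noteq> x (snd e))"

lemma utilde_diff:
  assumes "separates_edges G x"
  shows "utilde G (\<lambda>e. a e - b e) x = utilde G a x / utilde G b x"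
proof -
  have "utilde G (\<lambda>e. a e - b e) x =
      (\<Prod>e\<in>G. (x (fst e) - x (snd e)) powi a e / (x (fst e) - x (snd e)) powi b e)"
    unfolding utilde_def using assms by (intro prod.cong) (auto simp: separates_edges_def power_int_diff)
  then show ?thesis by (simp add: utilde_def prod_dividef)
qed

lemma utilde_indicator:
  assumes "finite G" "e \<in> G"
  shows "utilde G (indicator {e}) x = x (fst e) - x (snd e)"
proof -
  have "utilde G (indicator {e}) x = (\<Prod>f\<in>G. if f = e then x (fst f) - x (snd f) else 1)"
    unfolding utilde_def by (rule prod.cong) (auto simp: indicator_def)
  then show ?thesis using assms by (simp add: prod.delta')
qed

lemma utilde_nonzero: "finite G \<Longrightarrow> separates_edges G x \<Longrightarrow> utilde G u x \<noteq> 0"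
  by (auto simp: utilde_def separates_edges_def prod_zero_iff)

lemma utilde_lin_comb:
  assumes "finite G" "separates_edges G x" "finite I"
  shows "utilde G (\<lambda>e. \<Sum>i\<in>I. c i * w i e) x = (\<Prod>i\<in>I. utilde G (w i) x powi c i)"
proof -
  have "(x (fst e) - x (snd e)) powi (\<Sum>i\<in>I. c i * w i e) =
      (\<Prod>i\<in>I. ((x (fst e) - x (snd e)) powi w i e) powi c i)" if "e \<in> G" for e
    using assms that
    by (simp add: separates_edges_def power_int_sum mult.commute[of "c _"] power_int_mult)
  then have "utilde G (\<lambda>e. \<Sum>i\<in>I. c i * w i e) x =
      (\<Prod>e\<in>G. \<Prod>i\<in>I. ((x (fst e) - x (snd e)) powi w i e) powi c i)"
    unfolding utilde_def by (rule prod.cong[OF refl])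
  also have "\<dots> = (\<Prod>i\<in>I. utilde G (w i) x powi c i)"
    unfolding utilde_def by (subst prod.swap) (simp add: prod_power_int_distrib[OF assms(1)])
  finally show ?thesis .
qed

lemma mob_equiv_refl: "mob_equiv n x x"
  unfolding mob_equiv_def by (rule exI[of _ 1], rule exI[of _ 0], rule exI[of _ 0], rule exI[of _ 1]) simp

lemma cross_ratio_mob_equiv:
  assumes m: "mob_equiv n x x'" and x: "x \<in> conf n"
    and ijkl: "i < n" "j < n" "k < n" "l < n" "distinct [i, j, k, l]"
  shows "cross_ratio i j k l x' = cross_ratio i j k l x"
proof -
  obtain a b c d where det: "a * d - b * c \<noteq> 0"
    and mob: "\<And>i. i < n \<Longrightarrow> c * x i + d \<noteq> 0 \<and> x' i = (a * x i + b) / (c * x i + d)"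
    using m unfolding mob_equiv_def by blast
  have diff: "x' p - x' q = (a * d - b * c) * (x p - x q) / ((c * x p + d) * (c * x q + d))"
    if "p < n" "q < n" for p q
    using mob[OF that(1)] mob[OF that(2)] by (simp add: field_simps)
  define P where "P p = c * x p + d" for p
  have P: "P p \<noteq> 0" if "p < n" for p using mob[OF that] by (simp add: P_def)
  have dx: "x i - x l \<noteq> 0" "x j - x k \<noteq> 0"
    using x ijkl by (auto simp: conf_def)
  have cancel: "((D * dik / (Pi * Pk)) * (D * djl / (Pj * Pl))) / ((D * dil / (Pi * Pl)) * (D * djk / (Pj * Pk)))
       = (dik * djl) / (dil * djk)"
    if "D \<noteq> 0" "Pi \<noteq> 0" "Pj \<noteq> 0" "Pk \<noteq> 0" "Pl \<noteq> 0" "dil \<noteq> 0" "djk \<noteq> 0"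
    for D dik djl dil djk Pi Pj Pk Pl :: complex
    using that by (simp add: field_simps)
  show ?thesis
    unfolding cross_ratio_def diff[OF ijkl(1,3)] diff[OF ijkl(2,4)] diff[OF ijkl(1,4)] diff[OF ijkl(2,3)]
      P_def[symmetric]
    by (rule cancel[OF det P[OF ijkl(1)] P[OF ijkl(2)] P[OF ijkl(3)] P[OF ijkl(4)] dx])
qed

lemma cross_ratio_klein:
  "cross_ratio i j k l = cross_ratio j i l k"
  "cross_ratio i j k l = cross_ratio k l i j"
  "cross_ratio i j k l = cross_ratio l k j i"
  by (simp_all add: fun_eq_iff cross_ratio_def algebra_simps)

lemma sum_scattering_terms_zero:
  fixes s :: "nat \<times> nat \<Rightarrow> complex" and z :: "nat \<Rightarrow> complex"
  shows "(\<Sum>i<n. \<Sum>j\<in>nbrs n G i. s (edge i j) / (z i - z j)) = 0"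
proof -
  define f where "f i j = s (edge i j) / (z i - z j)" for i j
  have antisym: "f j i = - f i j" for i j
    unfolding f_def by (simp add: edge_def min.commute max.commute minus_divide_right)
  have "(\<Sum>i<n. \<Sum>j\<in>nbrs n G i. f i j) = (\<Sum>i<n. \<Sum>j | j < n \<and> j \<in> nbrs n G i. f i j)"
    by (intro sum.cong) (auto simp: nbrs_def)
  also have "\<dots> = (\<Sum>j<n. \<Sum>i | i < n \<and> j \<in> nbrs n G i. f i j)"
    using sum.swap_restrict[of "{..<n}" "{..<n}" f "\<lambda>i j. j \<in> nbrs n G i"] by simp
  also have "\<dots> = (\<Sum>j<n. \<Sum>i\<in>nbrs n G j. f i j)"
    by (intro sum.cong) (auto simp: nbrs_def edge_def min.commute max.commute)
  also have "\<dots> = (\<Sum>j<n. \<Sum>i\<in>nbrs n G j. - f j i)"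
    by (intro sum.cong refl) (rule antisym)
  also have "\<dots> = - (\<Sum>j<n. \<Sum>i\<in>nbrs n G j. f j i)"
    by (simp add: sum_negf)
  finally show ?thesis unfolding f_def by simp
qed

lemma kin_space_scale: "s \<in> kin_space n G \<Longrightarrow> (\<lambda>e. t * s e) \<in> kin_space n G"
  by (simp add: kin_space_def flip: sum_distrib_left)

lemma conf_nonempty: "(\<lambda>i. if i < n then of_nat i else 0) \<in> conf n"
  by (simp add: conf_def)

lemma copious_kin_space_nonzero:
  assumes "copious n G"
  obtains s e where "s \<in> kin_space n G" "s e \<noteq> 0"
proof -
  have dense: "zariski_dense_in (scat_image n G) (conf n)"
    using assms by (simp add: copious_def)
  have "scat_image n G \<noteq> {}"
  proof
    assume "scat_image n G = {}"
    then show False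
      using dense[unfolded zariski_dense_in_def, rule_format, OF polyfun.pconst, of 1, OF _ conf_nonempty]
      by simp
  qed
  then show ?thesis using that by (auto simp: scat_image_def)
qed

lemma kin_space_polyfun_nonzero_point:
  assumes p: "p \<in> polyfun" and s1: "s1 \<in> kin_space n G" "p s1 \<noteq> 0"
    and s0: "s0 \<in> kin_space n G" "s0 e0 \<noteq> 0"
  shows "\<exists>s\<in>kin_space n G. (\<exists>e. s e \<noteq> 0) \<and> p s \<noteq> 0"
proof (cases "\<exists>e. s1 e \<noteq> 0")
  case True
  then show ?thesis using s1 by blast
next
  case False
  text \<open>\<open>p\<close> does not vanish at \<open>s1 = 0\<close>, hence not at small nonzero multiples of \<open>s0\<close>.\<close>
  then have "s1 = (\<lambda>e. 0 * s0 e)" by auto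
  then have "((\<lambda>t. p (\<lambda>e. t * s0 e)) \<longlongrightarrow> p s1) (at 0)"
    using isCont_polyfun_scaled[OF p, where s = s0 and a = 0] by (simp add: continuous_at)
  then have ev: "eventually (\<lambda>t. p (\<lambda>e. t * s0 e) \<noteq> 0) (at (0::complex))"
    using s1(2) by (rule tendsto_imp_eventually_ne)
  have "eventually (\<lambda>t. t \<noteq> (0::complex)) (at 0)"
    by (simp add: eventually_at_filter)
  then obtain t :: complex where "p (\<lambda>e. t * s0 e) \<noteq> 0" "t \<noteq> 0"
    using eventually_happens'[OF at_neq_bot eventually_conj[OF ev]] by blast
  then show ?thesis
    using kin_space_scale[OF s0(1), of t] s0(2)
    by (intro bexI[where x = "\<lambda>e. t * s0 e"] conjI exI[where x = e0]) simp_all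
qed

lemma copious_obtain_finite_fiber:
  assumes cop: "copious n G"
  obtains s x where "s \<in> kin_space n G" "x \<in> conf n" "scat_eqs n G s x"
    "finite (mob_class n ` scat_fiber n G s)"
proof -
  obtain p where p: "p \<in> polyfun" "\<exists>s\<in>kin_space n G. p s \<noteq> 0"
    and generic: "\<forall>s\<in>kin_space n G. (\<exists>e. s e \<noteq> 0) \<longrightarrow> p s \<noteq> 0 \<longrightarrow>
        scat_fiber n G s \<noteq> {} \<and> finite (mob_class n ` scat_fiber n G s)"
    using cop unfolding copious_def generic_on_def by blast
  obtain s1 where s1: "s1 \<in> kin_space n G" "p s1 \<noteq> 0" using p(2) by blast
  obtain s0 e0 where s0: "s0 \<in> kin_space n G" "s0 e0 \<noteq> 0"
    using copious_kin_space_nonzero[OF cop] .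
  obtain s where s: "s \<in> kin_space n G" "\<exists>e. s e \<noteq> 0" "p s \<noteq> 0"
    using kin_space_polyfun_nonzero_point[OF p(1) s1 s0] by blast
  have fiber: "scat_fiber n G s \<noteq> {}" "finite (mob_class n ` scat_fiber n G s)"
    using generic s by blast+
  then obtain x where "x \<in> scat_fiber n G s" by blast
  then have "x \<in> conf n" "scat_eqs n G s x" by (simp_all add: scat_fiber_def)
  then show ?thesis by (rule that[OF s(1) _ _ fiber(2)])
qed

lemma mob_class_eq_imp_cross_ratio_eq:
  assumes "x \<in> conf n" "y \<in> conf n" "mob_class n x = mob_class n y"
    and "i < n" "j < n" "k < n" "l < n" "distinct [i, j, k, l]"
  shows "cross_ratio i j k l y = cross_ratio i j k l x"
proof -
  have "y \<in> mob_class n x"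
    using assms(2,3) mob_equiv_refl by (simp add: mob_class_def)
  then have "mob_equiv n x y" by (simp add: mob_class_def)
  then show ?thesis using assms(1,4-8) by (rule cross_ratio_mob_equiv)
qed

section \<open>Graphs with a universal vertex\<close>

locale universal_vertex_graph =
  fixes n :: nat and G :: "(nat \<times> nat) set" and v :: nat
  assumes n_ge_4: "n \<ge> 4" and simple: "simple_graph n G" and universal: "universal_vertex n G v"
begin

definition W :: "nat set" where
  "W = {..<n} - {v}"

definition GW :: "(nat \<times> nat) set" where
  "GW = {e \<in> G. fst e \<noteq> v \<and> snd e \<noteq> v}"

definition ycoord :: "(nat \<Rightarrow> complex) \<Rightarrow> nat \<Rightarrow> complex" where
  "ycoord x a = 1 / (x a - x v)"

definition orient :: "nat \<Rightarrow> complex" where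
  "orient a = (if a < v then 1 else -1)"

lemma edge_in_G_less: "e \<in> G \<Longrightarrow> fst e < snd e \<and> snd e < n"
  using simple by (auto simp: simple_graph_def)

lemma finite_G: "finite G"
proof -
  have "G \<subseteq> {..<n} \<times> {..<n}" using edge_in_G_less by force
  then show ?thesis by (rule finite_subset) auto
qed

lemma v_less_n: "v < n"
  using universal by (simp add: universal_vertex_def)

lemma W_iff: "a \<in> W \<longleftrightarrow> a < n \<and> a \<noteq> v"
  by (auto simp: W_def)

lemma v_notin_W: "v \<notin> W"
  by (simp add: W_iff)

lemma finite_W: "finite W"
  by (simp add: W_def)

lemma card_W: "card W = n - 1"
  using v_less_n by (simp add: W_def)

lemma finite_GW: "finite GW"
  using finite_G by (simp add: GW_def)

lemma edge_to_v_in_G: "a \<in> W \<Longrightarrow> edge a v \<in> G"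
  using universal by (auto simp: universal_vertex_def W_iff edge_def min.commute max.commute)

lemma edge_of_G: "e \<in> G \<Longrightarrow> edge (fst e) (snd e) = e"
  using edge_in_G_less[of e] by (cases e) (auto simp: edge_def)

lemma GW_D: "e \<in> GW \<Longrightarrow> e \<in> G \<and> fst e \<in> W \<and> snd e \<in> W \<and> fst e \<noteq> snd e"
  using edge_in_G_less[of e] by (auto simp: GW_def W_iff)

lemma edge_to_v_notin_GW: "edge a v \<notin> GW"
  by (auto simp: GW_def edge_def min_def max_def)

lemma edge_to_v_inj: "a \<noteq> v \<Longrightarrow> b \<noteq> v \<Longrightarrow> edge a v = edge b v \<longleftrightarrow> a = b"
  by (auto simp: edge_def min_def max_def split: if_splits)

lemma G_cases:
  assumes "g \<in> G"
  shows "g \<in> GW \<or> (\<exists>p\<in>W. g = edge p v)"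
proof (cases "fst g = v \<or> snd g = v")
  case True
  then have "g = edge (snd g) v \<and> snd g \<in> W \<or> g = edge (fst g) v \<and> fst g \<in> W"
    using edge_in_G_less[OF assms] by (cases g) (auto simp: edge_def W_iff)
  then show ?thesis by blast
next
  case False
  then show ?thesis using assms by (simp add: GW_def)
qed

lemma finite_nbrs: "finite (nbrs n G i)"
  by (rule finite_subset[of _ "{..<n}"]) (auto simp: nbrs_def)

lemma v_in_nbrs: "a \<in> W \<Longrightarrow> v \<in> nbrs n G a"
  using edge_to_v_in_G[of a] v_less_n by (auto simp: nbrs_def W_iff)

lemma nbrs_minus_v: "a \<in> W \<Longrightarrow> j \<in> nbrs n G a - {v} \<Longrightarrow> j \<in> W \<and> j \<noteq> a \<and> edge a j \<in> GW"
  by (auto simp: nbrs_def W_iff GW_def edge_def min_def max_def)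

lemma conf_separates_edges: "x \<in> conf n \<Longrightarrow> separates_edges G x"
  using edge_in_G_less by (fastforce simp: conf_def separates_edges_def)

lemma conf_sub_v_nonzero: "x \<in> conf n \<Longrightarrow> a \<in> W \<Longrightarrow> x a - x v \<noteq> 0"
  using v_less_n by (auto simp: conf_def W_iff)

lemma ycoord_nonzero: "x \<in> conf n \<Longrightarrow> a \<in> W \<Longrightarrow> ycoord x a \<noteq> 0"
  using conf_sub_v_nonzero by (simp add: ycoord_def)

lemma ycoord_inj: "x \<in> conf n \<Longrightarrow> a \<in> W \<Longrightarrow> b \<in> W \<Longrightarrow> a \<noteq> b \<Longrightarrow> ycoord x a \<noteq> ycoord x b"
  using conf_sub_v_nonzero[of x a] conf_sub_v_nonzero[of x b]
  by (auto simp: ycoord_def conf_def W_iff)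

lemma conf_eq_ycoord: "x \<in> conf n \<Longrightarrow> a \<in> W \<Longrightarrow> x a = x v + 1 / ycoord x a"
  using conf_sub_v_nonzero[of x a] by (simp add: ycoord_def)

lemma edge_to_v_sub: "a \<noteq> v \<Longrightarrow> x (fst (edge a v)) - x (snd (edge a v)) = orient a * (x a - x v)"
  by (auto simp: edge_def orient_def min_def max_def)

lemma orient_sq: "orient a * orient a = 1"
  by (simp add: orient_def)

lemma divide_orient: "X / (orient a * Y) = orient a * (X / Y)"
  by (simp add: orient_def)

definition tri_vec :: "nat \<times> nat \<Rightarrow> nat \<times> nat \<Rightarrow> int" where
  "tri_vec e = (\<lambda>g. indicator {e} g - indicator {edge (fst e) v} g - indicator {edge (snd e) v} g)"

lemma utilde_tri_vec:
  assumes e: "e \<in> GW" and x: "x \<in> conf n"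
  shows "utilde G (tri_vec e) x = orient (fst e) * orient (snd e) * (ycoord x (snd e) - ycoord x (fst e))"
proof -
  have sep: "separates_edges G x" by (rule conf_separates_edges[OF x])
  have W: "fst e \<in> W" "snd e \<in> W" and inG: "e \<in> G" using GW_D[OF e] by auto
  then have nv: "fst e \<noteq> v" "snd e \<noteq> v" by (auto simp: W_iff)
  have ne: "x (fst e) - x v \<noteq> 0" "x (snd e) - x v \<noteq> 0"
    using conf_sub_v_nonzero[OF x] W by auto
  have "utilde G (tri_vec e) x = (x (fst e) - x (snd e)) / (orient (fst e) * (x (fst e) - x v))
      / (orient (snd e) * (x (snd e) - x v))"
    unfolding tri_vec_def
    by (simp only: utilde_diff[OF sep] utilde_indicator[OF finite_G] inG edge_to_v_in_G W
        edge_to_v_sub[OF nv(1)] edge_to_v_sub[OF nv(2)])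
  also have "\<dots> = orient (fst e) * orient (snd e) * ((x (fst e) - x (snd e)) / (x (fst e) - x v) / (x (snd e) - x v))"
    by (simp add: divide_orient)
  also have "(x (fst e) - x (snd e)) / (x (fst e) - x v) / (x (snd e) - x v) = ycoord x (snd e) - ycoord x (fst e)"
    using ne by (simp add: ycoord_def field_simps)
  finally show ?thesis .
qed

lemma row_sum_indicator:
  assumes "f \<in> G" "i < n"
  shows "(\<Sum>j\<in>nbrs n G i. indicator {f} (edge i j)) = of_bool (i = fst f) + (of_bool (i = snd f) :: int)"
proof -
  obtain p q where f: "f = (p, q)" by (cases f)
  have pq: "p < q" "q < n" using edge_in_G_less[OF assms(1)] f by auto
  have "indicator {f} (edge i j) =
      (if i = p then of_bool (j = q) else if i = q then of_bool (j = p) else 0 :: int)" for j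
    using pq f by (auto simp: edge_def min_def max_def)
  moreover have "i = p \<Longrightarrow> q \<in> nbrs n G i" "i = q \<Longrightarrow> p \<in> nbrs n G i"
    using pq assms f edge_of_G[OF assms(1)] by (auto simp: nbrs_def edge_def min_def max_def)
  ultimately show ?thesis
    using pq f by (simp add: finite_nbrs)
qed

lemma row_sum_tri_vec:
  assumes "e \<in> GW" "i < n"
  shows "(\<Sum>j\<in>nbrs n G i. tri_vec e (edge i j)) = (if i = v then -2 else 0)"
proof -
  have W: "fst e \<in> W" "snd e \<in> W" and inG: "e \<in> G" using GW_D[OF assms(1)] by auto
  show ?thesis
    unfolding tri_vec_def sum_subtractf row_sum_indicator[OF inG assms(2)]
      row_sum_indicator[OF edge_to_v_in_G[OF W(1)] assms(2)]
      row_sum_indicator[OF edge_to_v_in_G[OF W(2)] assms(2)]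
    using W by (auto simp: edge_def min_def max_def W_iff)
qed

lemma tri_vec_outside_G: "e \<in> GW \<Longrightarrow> g \<notin> G \<Longrightarrow> tri_vec e g = 0"
  using GW_D[of e] edge_to_v_in_G[of "fst e"] edge_to_v_in_G[of "snd e"]
  by (auto simp: tri_vec_def indicator_def)

lemma tri_vec_diff_in_lattice:
  assumes "e \<in> GW" "f \<in> GW"
  shows "(\<lambda>g. tri_vec e g - tri_vec f g) \<in> kin_lattice n G"
proof -
  have "\<forall>g. g \<notin> G \<longrightarrow> tri_vec e g - tri_vec f g = 0"
    using assms by (simp add: tri_vec_outside_G)
  then show ?thesis
    using assms by (simp add: kin_lattice_def sum_subtractf row_sum_tri_vec)
qed

lemma sum_GW_at_vertex:
  assumes w: "w \<in> kin_lattice n G" and p: "p \<in> W"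
  shows "(\<Sum>e | e \<in> GW \<and> (fst e = p \<or> snd e = p). w e) = - w (edge p v)"
proof -
  have "(\<Sum>j\<in>nbrs n G p. w (edge p j)) = 0"
    using w p by (simp add: kin_lattice_def W_iff)
  moreover have "(\<Sum>j\<in>nbrs n G p. w (edge p j)) = w (edge p v) + (\<Sum>j\<in>nbrs n G p - {v}. w (edge p j))"
    using v_in_nbrs[OF p] finite_nbrs by (simp add: sum.remove)
  moreover have "bij_betw (edge p) (nbrs n G p - {v}) {e \<in> GW. fst e = p \<or> snd e = p}"
  proof (rule bij_betwI')
    fix j j' assume "j \<in> nbrs n G p - {v}" "j' \<in> nbrs n G p - {v}"
    then show "edge p j = edge p j' \<longleftrightarrow> j = j'"
      by (auto simp: nbrs_def edge_def min_def max_def split: if_splits)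
  next
    fix j assume "j \<in> nbrs n G p - {v}"
    then show "edge p j \<in> {e \<in> GW. fst e = p \<or> snd e = p}"
      using nbrs_minus_v[OF p] by (auto simp: edge_def min_def max_def)
  next
    fix e assume e: "e \<in> {e \<in> GW. fst e = p \<or> snd e = p}"
    then have "e = edge p (if fst e = p then snd e else fst e)"
      using edge_of_G[of e] GW_D[of e] by (auto simp: edge_def min_def max_def)
    moreover have "(if fst e = p then snd e else fst e) \<in> nbrs n G p - {v}"
      using e GW_D[of e] edge_of_G[of e] by (auto simp: nbrs_def W_iff edge_def min_def max_def)
    ultimately show "\<exists>j\<in>nbrs n G p - {v}. e = edge p j" by blast
  qed
  then have "(\<Sum>j\<in>nbrs n G p - {v}. w (edge p j)) = (\<Sum>e | e \<in> GW \<and> (fst e = p \<or> snd e = p). w e)"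
    by (rule sum.reindex_bij_betw)
  ultimately show ?thesis by simp
qed

lemma lattice_sum_edges_to_v:
  assumes w: "w \<in> kin_lattice n G"
  shows "(\<Sum>e\<in>GW. w e * (indicator {edge (fst e) v} g + indicator {edge (snd e) v} g)) =
    (if g \<in> GW then 0 else - w g)"
proof (cases "\<exists>p\<in>W. g = edge p v")
  case True
  then obtain p where p: "p \<in> W" "g = edge p v" by blast
  have "(\<Sum>e\<in>GW. w e * (indicator {edge (fst e) v} g + indicator {edge (snd e) v} g)) =
      (\<Sum>e\<in>GW. if fst e = p \<or> snd e = p then w e else 0)"
  proof (rule sum.cong[OF refl])
    fix e assume "e \<in> GW"
    then have "fst e \<noteq> v" "snd e \<noteq> v" "fst e \<noteq> snd e" "p \<noteq> v"
      using GW_D[of e] p by (auto simp: W_iff)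
    then show "w e * (indicator {edge (fst e) v} g + indicator {edge (snd e) v} g) =
        (if fst e = p \<or> snd e = p then w e else 0)"
      unfolding p(2) by (auto simp: edge_to_v_inj indicator_def)
  qed
  also have "\<dots> = - w g"
    using finite_GW sum_GW_at_vertex[OF w p(1)] p(2) by (simp add: sum.inter_filter)
  finally show ?thesis using p(2) edge_to_v_notin_GW by simp
next
  case False
  then have "g \<noteq> edge (fst e) v \<and> g \<noteq> edge (snd e) v" if "e \<in> GW" for e
    using GW_D[OF that] by blast
  moreover have "g \<in> GW \<or> w g = 0"
    using False G_cases[of g] w unfolding kin_lattice_def by blast
  ultimately show ?thesis by (auto simp: indicator_def intro!: sum.neutral)
qed

lemma lattice_sum_tri_vec:
  assumes w: "w \<in> kin_lattice n G"
  shows "(\<Sum>e\<in>GW. w e * tri_vec e g) = w g"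
proof -
  have "(\<Sum>e\<in>GW. w e * indicator {e} g) = (\<Sum>e\<in>GW. if g = e then w g else 0)"
    by (rule sum.cong) (auto simp: indicator_def)
  then have "(\<Sum>e\<in>GW. w e * indicator {e} g) = (if g \<in> GW then w g else 0)"
    using finite_GW by simp
  then show ?thesis
    using lattice_sum_edges_to_v[OF w, of g]
    by (auto simp: tri_vec_def sum_subtractf algebra_simps simp flip: sum.distrib)
qed

lemma lattice_weight_sum_zero:
  assumes w: "w \<in> kin_lattice n G"
  shows "(\<Sum>e\<in>GW. w e) = 0"
proof -
  have "0 = (\<Sum>j\<in>nbrs n G v. w (edge v j))"
    using w v_less_n by (simp add: kin_lattice_def)
  also have "\<dots> = (\<Sum>j\<in>nbrs n G v. \<Sum>e\<in>GW. w e * tri_vec e (edge v j))"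
    by (simp add: lattice_sum_tri_vec[OF w])
  also have "\<dots> = (\<Sum>e\<in>GW. w e * (\<Sum>j\<in>nbrs n G v. tri_vec e (edge v j)))"
    by (simp add: sum.swap[of _ "nbrs n G v"] sum_distrib_left)
  also have "\<dots> = -2 * (\<Sum>e\<in>GW. w e)"
    by (simp add: row_sum_tri_vec v_less_n sum_distrib_left mult.commute)
  finally show ?thesis by simp
qed

lemma lattice_expansion:
  assumes "w \<in> kin_lattice n G" "f \<in> GW"
  shows "w = (\<lambda>g. \<Sum>e\<in>GW. w e * (tri_vec e g - tri_vec f g))"
  using lattice_sum_tri_vec[OF assms(1)] lattice_weight_sum_zero[OF assms(1)]
  by (simp add: right_diff_distrib sum_subtractf flip: sum_distrib_right)

lemma conf_diff_ycoord:
  assumes x: "x \<in> conf n" and ab: "a \<in> W" "b \<in> W"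
  shows "x a - x b = (ycoord x b - ycoord x a) / (ycoord x a * ycoord x b)"
proof -
  have "ycoord x b - ycoord x a = (x a - x b) * (ycoord x a * ycoord x b)"
    using conf_sub_v_nonzero[OF x ab(1)] conf_sub_v_nonzero[OF x ab(2)] by (simp add: ycoord_def field_simps)
  then show ?thesis using ycoord_nonzero[OF x ab(1)] ycoord_nonzero[OF x ab(2)] by simp
qed

lemma cross_ratio_ycoord_v:
  assumes x: "x \<in> conf n" and W: "i \<in> W" "j \<in> W" "k \<in> W" and d: "distinct [i, j, k]"
  shows "cross_ratio i j k v x = (ycoord x i - ycoord x k) / (ycoord x j - ycoord x k)"
proof -
  have "yi \<noteq> 0 \<Longrightarrow> yj \<noteq> 0 \<Longrightarrow> yk \<noteq> 0 \<Longrightarrow> yj \<noteq> yk \<Longrightarrow>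
    ((xv + 1 / yi) - (xv + 1 / yk)) * ((xv + 1 / yj) - xv) / (((xv + 1 / yi) - xv) * ((xv + 1 / yj) - (xv + 1 / yk)))
    = (yi - yk) / (yj - yk)" for xv yi yj yk :: complex
    by (simp add: field_simps)
  then show ?thesis
    unfolding cross_ratio_def conf_eq_ycoord[OF x W(1)] conf_eq_ycoord[OF x W(2)] conf_eq_ycoord[OF x W(3)]
    using ycoord_nonzero[OF x] ycoord_inj[OF x] W d by simp
qed

lemma cross_ratio_ycoord:
  assumes x: "x \<in> conf n" and W: "i \<in> W" "j \<in> W" "k \<in> W" "l \<in> W" and d: "distinct [i, j, k, l]"
  shows "cross_ratio i j k l x = ((ycoord x i - ycoord x k) * (ycoord x j - ycoord x l)) /
    ((ycoord x i - ycoord x l) * (ycoord x j - ycoord x k))"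
proof -
  have alg: "(yk - yi) / (yi * yk) * ((yl - yj) / (yj * yl)) / ((yl - yi) / (yi * yl) * ((yk - yj) / (yj * yk)))
      = ((yi - yk) * (yj - yl)) / ((yi - yl) * (yj - yk))"
    if "yi \<noteq> 0" "yj \<noteq> 0" "yk \<noteq> 0" "yl \<noteq> 0" for yi yj yk yl :: complex
  proof -
    have num: "(yk - yi) / (yi * yk) * ((yl - yj) / (yj * yl)) = ((yi - yk) * (yj - yl)) / (yi * yj * yk * yl)"
      and den: "(yl - yi) / (yi * yl) * ((yk - yj) / (yj * yk)) = ((yi - yl) * (yj - yk)) / (yi * yj * yk * yl)"
      using that by (simp_all add: field_simps)
    have cancel: "(N / P) / (D / P) = N / D" if "P \<noteq> 0" for N D P :: complex
      using that by simp
    show ?thesis unfolding num den by (rule cancel) (use that in simp)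
  qed
  show ?thesis
    unfolding cross_ratio_def conf_diff_ycoord[OF x W(1) W(3)] conf_diff_ycoord[OF x W(2) W(4)]
      conf_diff_ycoord[OF x W(1) W(4)] conf_diff_ycoord[OF x W(2) W(3)]
    by (rule alg) (use ycoord_nonzero[OF x] W in auto)
qed

text \<open>The witness is the affine map conjugated by \<open>ycoord\<close>.\<close>
lemma affine_ycoord_imp_mob_equiv:
  assumes x: "x \<in> conf n" and x': "x' \<in> conf n" and l: "l \<noteq> 0"
    and affine: "\<And>a. a \<in> W \<Longrightarrow> ycoord x' a = l * ycoord x a + m"
  shows "mob_equiv n x x'"
  unfolding mob_equiv_def
proof (intro exI conjI)
  have "(m * x' v + 1) * (l - m * x v) - (l * x' v - m * x v * x' v - x v) * m = l"
    by (simp add: algebra_simps)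
  then show "(m * x' v + 1) * (l - m * x v) - (l * x' v - m * x v * x' v - x v) * m \<noteq> 0"
    using l by simp
  show "\<forall>i<n. m * x i + (l - m * x v) \<noteq> 0 \<and>
    x' i = ((m * x' v + 1) * x i + (l * x' v - m * x v * x' v - x v)) / (m * x i + (l - m * x v))"
  proof (intro allI impI)
    fix i assume i: "i < n"
    show "m * x i + (l - m * x v) \<noteq> 0 \<and>
      x' i = ((m * x' v + 1) * x i + (l * x' v - m * x v * x' v - x v)) / (m * x i + (l - m * x v))"
    proof (cases "i = v")
      case True
      have num: "(m * x' v + 1) * x v + (l * x' v - m * x v * x' v - x v) = l * x' v"
        by (simp add: algebra_simps)
      show ?thesis unfolding True num using l by simp
    next
      case False
      then have iW: "i \<in> W" using i by (simp add: W_iff)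
      define A where "A = x i - x v"
      have A: "A \<noteq> 0" using conf_sub_v_nonzero[OF x iW] by (simp add: A_def)
      have Y: "ycoord x' i \<noteq> 0" using ycoord_nonzero[OF x' iW] .
      have den: "m * x i + (l - m * x v) = A * ycoord x' i"
        using affine[OF iW] A by (simp add: ycoord_def A_def field_simps)
      have num: "(m * x' v + 1) * x i + (l * x' v - m * x v * x' v - x v) = x' v * (A * ycoord x' i) + A"
        unfolding den[symmetric] by (simp add: A_def algebra_simps)
      show ?thesis
        unfolding den num conf_eq_ycoord[OF x' iW] using A Y by (simp add: field_simps)
    qed
  qed
qed

subsection \<open>Copious graphs stay connected without the universal vertex\<close>

lemma scattering_sum_ycoord:
  assumes x: "x \<in> conf n" and s: "s \<in> kin_space n G" and a: "a \<in> W"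
  shows "(\<Sum>j\<in>nbrs n G a. s (edge a j) / (x a - x j)) =
    - (ycoord x a ^ 2) * (\<Sum>j\<in>nbrs n G a - {v}. s (edge a j) / (ycoord x a - ycoord x j))"
proof -
  have split: "(\<Sum>j\<in>nbrs n G a. g j) = g v + (\<Sum>j\<in>nbrs n G a - {v}. g j)" for g :: "nat \<Rightarrow> complex"
    using v_in_nbrs[OF a] finite_nbrs by (simp add: sum.remove)
  text \<open>The row sum of \<open>s\<close> at \<open>a\<close> vanishes, so the term for \<open>v\<close> can be spread over the others.\<close>
  have "s (edge a v) = - (\<Sum>j\<in>nbrs n G a - {v}. s (edge a j))"
    using s a split[of "\<lambda>j. s (edge a j)"] by (simp add: kin_space_def W_iff eq_neg_iff_add_eq_0)
  then have "(\<Sum>j\<in>nbrs n G a. s (edge a j) / (x a - x j)) =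
      (\<Sum>j\<in>nbrs n G a - {v}. s (edge a j) / (x a - x j) - s (edge a j) * ycoord x a)"
    unfolding split by (simp add: ycoord_def sum_subtractf sum_distrib_right sum_divide_distrib)
  also have "\<dots> = (\<Sum>j\<in>nbrs n G a - {v}. - (ycoord x a ^ 2) * (s (edge a j) / (ycoord x a - ycoord x j)))"
  proof (rule sum.cong[OF refl])
    fix j assume "j \<in> nbrs n G a - {v}"
    then have j: "j \<in> W" "j \<noteq> a" using nbrs_minus_v[OF a] by auto
    have "s (edge a j) / (x a - x j) - s (edge a j) * ycoord x a =
        s (edge a j) / ((ycoord x j - ycoord x a) / (ycoord x a * ycoord x j)) - s (edge a j) * ycoord x a"
      by (simp add: conf_diff_ycoord[OF x a j(1)])
    also have "\<dots> = - (ycoord x a ^ 2) * (s (edge a j) / (ycoord x a - ycoord x j))"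
      using ycoord_nonzero[OF x a] ycoord_nonzero[OF x j(1)] ycoord_inj[OF x a j(1)] j(2)
      by (simp add: field_simps power2_eq_square)
    finally show "s (edge a j) / (x a - x j) - s (edge a j) * ycoord x a =
        - (ycoord x a ^ 2) * (s (edge a j) / (ycoord x a - ycoord x j))" .
  qed
  finally show ?thesis by (simp add: sum_distrib_left)
qed

definition W_connected :: bool where
  "W_connected \<longleftrightarrow> (\<forall>K. (\<forall>e\<in>GW. fst e \<in> K \<longleftrightarrow> snd e \<in> K) \<longrightarrow> W \<subseteq> K \<or> W \<inter> K = {})"

definition yshift :: "nat set \<Rightarrow> complex \<Rightarrow> (nat \<Rightarrow> complex) \<Rightarrow> nat \<Rightarrow> complex" where
  "yshift K t x i = ycoord x i + (if i \<in> K then t else 0)"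

definition translate :: "nat set \<Rightarrow> complex \<Rightarrow> (nat \<Rightarrow> complex) \<Rightarrow> nat \<Rightarrow> complex" where
  "translate K t x i = (if i \<in> W then x v + 1 / yshift K t x i else x i)"

definition admissible :: "nat set \<Rightarrow> (nat \<Rightarrow> complex) \<Rightarrow> complex \<Rightarrow> bool" where
  "admissible K x t \<longleftrightarrow> (\<forall>i\<in>W. yshift K t x i \<noteq> 0) \<and> inj_on (yshift K t x) W"

lemma finite_not_admissible:
  assumes x: "x \<in> conf n"
  shows "finite {t. \<not> admissible K x t}"
proof (rule finite_subset)
  show "finite ((\<lambda>i. - ycoord x i) ` W \<union> (\<lambda>(i, j). ycoord x j - ycoord x i) ` (W \<times> W))"
    using finite_W by simp
  show "{t. \<not> admissible K x t} \<subseteq> (\<lambda>i. - ycoord x i) ` W \<union> (\<lambda>(i, j). ycoord x j - ycoord x i) ` (W \<times> W)"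
  proof
    fix t assume "t \<in> {t. \<not> admissible K x t}"
    then consider i where "i \<in> W" "yshift K t x i = 0"
      | i j where "i \<in> W" "j \<in> W" "i \<noteq> j" "yshift K t x i = yshift K t x j"
      by (auto simp: admissible_def inj_on_def)
    then show "t \<in> (\<lambda>i. - ycoord x i) ` W \<union> (\<lambda>(i, j). ycoord x j - ycoord x i) ` (W \<times> W)"
    proof cases
      case (1 i)
      then have "ycoord x i + t = 0"
        using ycoord_nonzero[OF x] by (auto simp: yshift_def split: if_splits)
      then have "t = - ycoord x i" by (simp add: eq_neg_iff_add_eq_0 add.commute)
      then show ?thesis using 1(1) by blast
    next
      case (2 i j)
      then have "t = ycoord x j - ycoord x i \<or> t = ycoord x i - ycoord x j"
        using ycoord_inj[OF x] by (auto simp: yshift_def algebra_simps split: if_splits)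
      then show ?thesis using 2 by force
    qed
  qed
qed

lemma ycoord_translate:
  assumes "admissible K x t" "i \<in> W"
  shows "ycoord (translate K t x) i = yshift K t x i"
  using assms v_notin_W by (simp add: admissible_def ycoord_def translate_def)

lemma translate_conf:
  assumes x: "x \<in> conf n" and t: "admissible K x t"
  shows "translate K t x \<in> conf n"
  unfolding conf_def
proof (intro CollectI conjI allI impI)
  fix i j assume ij: "i < n" "j < n" "i \<noteq> j"
  have nz: "yshift K t x i \<noteq> 0" if "i \<in> W" for i
    using t that by (simp add: admissible_def)
  have "yshift K t x i \<noteq> yshift K t x j" if "i \<in> W" "j \<in> W"
    using t that ij(3) by (auto simp: admissible_def dest: inj_onD)
  then show "translate K t x i \<noteq> translate K t x j"
    using ij nz by (auto simp: translate_def W_iff field_simps)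
next
  fix i assume "n \<le> i"
  then show "translate K t x i = 0" using x by (simp add: translate_def W_iff conf_def)
qed

text \<open>In the coordinates \<open>ycoord\<close> the scattering equations at the vertices of \<open>W\<close> only see
  differences along edges of \<open>GW\<close>, which a translation on a union of components of \<open>GW\<close>
  leaves unchanged; the equation at \<open>v\<close> then follows from the others.\<close>
lemma translate_scat_eqs:
  assumes x: "x \<in> conf n" and s: "s \<in> kin_space n G" and eqs: "scat_eqs n G s x"
    and closed: "\<forall>e\<in>GW. fst e \<in> K \<longleftrightarrow> snd e \<in> K" and t: "admissible K x t"
  shows "scat_eqs n G s (translate K t x)"
proof -
  define x' where "x' = translate K t x"
  have x': "x' \<in> conf n" using translate_conf[OF x t] by (simp add: x'_def)
  have at_W: "(\<Sum>j\<in>nbrs n G a. s (edge a j) / (x' a - x' j)) = 0" if a: "a \<in> W" for a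
  proof -
    have "(\<Sum>j\<in>nbrs n G a - {v}. s (edge a j) / (ycoord x' a - ycoord x' j)) =
        (\<Sum>j\<in>nbrs n G a - {v}. s (edge a j) / (ycoord x a - ycoord x j))"
    proof (rule sum.cong[OF refl])
      fix j assume j: "j \<in> nbrs n G a - {v}"
      then have "j \<in> W" "edge a j \<in> GW" using nbrs_minus_v[OF a] by auto
      moreover have "a \<in> K \<longleftrightarrow> j \<in> K"
        using closed \<open>edge a j \<in> GW\<close> by (auto simp: edge_def min_def max_def split: if_splits)
      ultimately show "s (edge a j) / (ycoord x' a - ycoord x' j) = s (edge a j) / (ycoord x a - ycoord x j)"
        using a ycoord_translate[OF t] by (simp add: x'_def yshift_def)
    qed
    moreover have "(\<Sum>j\<in>nbrs n G a - {v}. s (edge a j) / (ycoord x a - ycoord x j)) = 0"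
      using eqs a scattering_sum_ycoord[OF x s a] ycoord_nonzero[OF x a]
      by (simp add: scat_eqs_def W_iff)
    ultimately show ?thesis using scattering_sum_ycoord[OF x' s a] by simp
  qed
  have "{..<n} = insert v W" using v_less_n by (auto simp: W_def)
  then have "(\<Sum>j\<in>nbrs n G v. s (edge v j) / (x' v - x' j)) + (\<Sum>a\<in>W. \<Sum>j\<in>nbrs n G a. s (edge a j) / (x' a - x' j)) = 0"
    using sum_scattering_terms_zero[where n = n and G = G and s = s and z = x'] v_notin_W finite_W by simp
  then have "(\<Sum>j\<in>nbrs n G v. s (edge v j) / (x' v - x' j)) = 0"
    using at_W by simp
  then show ?thesis
    using at_W unfolding x'_def[symmetric] scat_eqs_def by (metis W_iff)
qed

lemma translate_cross_ratio_inj: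
  assumes x: "x \<in> conf n" and a: "a \<in> W" "a \<in> K" and c: "c \<in> W" "c \<notin> K"
    and w: "w \<in> W" "w \<noteq> a" "w \<noteq> c" and t: "admissible K x t" and t': "admissible K x t'"
    and eq: "cross_ratio a w c v (translate K t x) = cross_ratio a w c v (translate K t' x)"
  shows "t = t'"
proof -
  have ac: "a \<noteq> c" using a c by blast
  define A where "A = ycoord x a - ycoord x c"
  define B where "B = ycoord x w - ycoord x c"
  define u where "u \<tau> = (if w \<in> K then \<tau> else 0)" for \<tau> :: complex
  have cr: "cross_ratio a w c v (translate K \<tau> x) = (A + \<tau>) / (B + u \<tau>)" if \<tau>: "admissible K x \<tau>" for \<tau>
    using cross_ratio_ycoord_v[OF translate_conf[OF x \<tau>] a(1) w(1) c(1)] a c w ac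
    by (cases "w \<in> K") (simp_all add: ycoord_translate[OF \<tau>] yshift_def A_def B_def u_def algebra_simps)
  have "B + u \<tau> = yshift K \<tau> x w - yshift K \<tau> x c" for \<tau>
    using c(2) by (simp add: B_def u_def yshift_def)
  moreover have "yshift K \<tau> x w \<noteq> yshift K \<tau> x c" if "admissible K x \<tau>" for \<tau>
    using that w c by (auto simp: admissible_def dest: inj_onD)
  ultimately have "B + u \<tau> \<noteq> 0" if "admissible K x \<tau>" for \<tau>
    using that by simp
  then have cross: "(A + t) * (B + u t') = (A + t') * (B + u t)"
    using eq t t' by (simp add: cr field_simps)
  show ?thesis
  proof (cases "w \<in> K")
    case True
    then have "(A - B) * (t' - t) = 0" using cross by (simp add: u_def algebra_simps)
    moreover have "A \<noteq> B" using ycoord_inj[OF x a(1) w(1)] w(2) by (simp add: A_def B_def)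
    ultimately show ?thesis by simp
  next
    case False
    then have "B * (t - t') = 0" using cross by (simp add: u_def algebra_simps)
    moreover have "B \<noteq> 0" using ycoord_inj[OF x w(1) c(1)] w(3) by (simp add: B_def)
    ultimately show ?thesis by simp
  qed
qed

lemma copious_imp_W_connected:
  assumes "copious n G"
  shows W_connected
proof (rule ccontr)
  assume "\<not> W_connected"
  then obtain K where closed: "\<forall>e\<in>GW. fst e \<in> K \<longleftrightarrow> snd e \<in> K" and "\<not> W \<subseteq> K" "W \<inter> K \<noteq> {}"
    unfolding W_connected_def by blast
  then obtain a c where a: "a \<in> W" "a \<in> K" and c: "c \<in> W" "c \<notin> K" by blast
  then have "a \<noteq> c" by blast
  then have "card (W - {a, c}) \<noteq> 0"
    using a c card_W n_ge_4 finite_W by (simp add: card_Diff_subset)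
  then obtain w where w: "w \<in> W" "w \<noteq> a" "w \<noteq> c"
    by (metis Diff_iff card.empty ex_in_conv insertCI)
  obtain s x where s: "s \<in> kin_space n G" and x: "x \<in> conf n" "scat_eqs n G s x"
    and fin: "finite (mob_class n ` scat_fiber n G s)"
    using copious_obtain_finite_fiber[OF assms] by metis
  define T where "T = {t. admissible K x t}"
  have "T = UNIV - {t. \<not> admissible K x t}" by (auto simp: T_def)
  then have "infinite T"
    using finite_not_admissible[OF x(1)] infinite_UNIV_char_0 by (simp add: Diff_infinite_finite)
  moreover have "inj_on (\<lambda>t. mob_class n (translate K t x)) T"
  proof (rule inj_onI)
    fix t t' assume "t \<in> T" "t' \<in> T" "mob_class n (translate K t x) = mob_class n (translate K t' x)"
    then show "t = t'"
      using mob_class_eq_imp_cross_ratio_eq[of "translate K t x" n "translate K t' x" a w c v]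
        translate_cross_ratio_inj[OF x(1) a c w] translate_conf[OF x(1)] a c w v_less_n
      by (auto simp: T_def W_iff)
  qed
  moreover have "(\<lambda>t. mob_class n (translate K t x)) ` T \<subseteq> mob_class n ` scat_fiber n G s"
    using translate_conf[OF x(1)] translate_scat_eqs[OF x(1) s x(2) closed]
    by (auto simp: T_def scat_fiber_def)
  ultimately show False
    using fin by (meson finite_imageD finite_subset)
qed

lemma GW_nonempty:
  assumes W_connected
  shows "GW \<noteq> {}"
proof
  assume GW: "GW = {}"
  have "W \<noteq> {}" using card_W n_ge_4 by auto
  then obtain c where c: "c \<in> W" by blast
  then have "W \<subseteq> {c}"
    using assms[unfolded W_connected_def, rule_format, of "{c}"] GW by blast
  then have "card W \<le> 1" using card_mono[of "{c}" W] by simp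
  then show False using card_W n_ge_4 by simp
qed

end

section \<open>The map \<open>\<Phi>\<close> is an embedding\<close>

locale universal_vertex_lattice_basis = universal_vertex_graph +
  fixes r :: nat and u :: "nat \<Rightarrow> nat \<times> nat \<Rightarrow> int" and c0 d0 :: nat
  assumes basis: "is_lattice_basis n G r u"
    and ref_edge: "(c0, d0) \<in> GW"
    and connected: W_connected
begin

abbreviation F :: "(nat \<Rightarrow> complex) \<Rightarrow> nat \<Rightarrow> complex" where
  "F \<equiv> Phi G r u"

lemma ref_edge_W: "c0 \<in> W" "d0 \<in> W" "c0 \<noteq> d0"
  using GW_D[OF ref_edge] by auto

lemma basis_in_lattice: "k < r \<Longrightarrow> u k \<in> kin_lattice n G"
  using basis by (simp add: is_lattice_basis_def)

lemma basis_coeff_unique: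
  assumes "(\<lambda>e. \<Sum>k<r. c k * u k e) = (\<lambda>e. \<Sum>k<r. c' k * u k e)" "k < r"
  shows "c k = c' k"
proof -
  have indep: "\<forall>c. (\<forall>e. (\<Sum>k<r. c k * u k e) = 0) \<longrightarrow> (\<forall>k<r. c k = 0)"
    using basis by (simp add: is_lattice_basis_def)
  have "(\<Sum>k<r. (c k - c' k) * u k e) = 0" for e
    using fun_cong[OF assms(1), of e] by (simp add: left_diff_distrib sum_subtractf)
  then have "c k - c' k = 0"
    using indep[rule_format, of "\<lambda>k. c k - c' k"] assms(2) by blast
  then show ?thesis by simp
qed

lemma Phi_torus: "x \<in> conf n \<Longrightarrow> F x \<in> torus r"
  using utilde_nonzero[OF finite_G conf_separates_edges] by (auto simp: torus_def Phi_def)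

lemma utilde_basis_comb:
  "x \<in> conf n \<Longrightarrow> utilde G (\<lambda>e. \<Sum>k<r. c k * u k e) x = torus_monomial r c (F x)"
  by (simp add: utilde_lin_comb[OF finite_G conf_separates_edges] torus_monomial_def Phi_def)

definition coeffs :: "nat \<times> nat \<Rightarrow> nat \<Rightarrow> int" where
  "coeffs e = (SOME c. (\<lambda>g. tri_vec e g - tri_vec (c0, d0) g) = (\<lambda>g. \<Sum>k<r. c k * u k g))"

lemma coeffs:
  assumes "e \<in> GW"
  shows "(\<lambda>g. tri_vec e g - tri_vec (c0, d0) g) = (\<lambda>g. \<Sum>k<r. coeffs e k * u k g)"
proof -
  have "(\<lambda>g. tri_vec e g - tri_vec (c0, d0) g) \<in> kin_lattice n G"
    by (rule tri_vec_diff_in_lattice[OF assms ref_edge])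
  then have "\<exists>c. (\<lambda>g. tri_vec e g - tri_vec (c0, d0) g) = (\<lambda>g. \<Sum>k<r. c k * u k g)"
    using basis by (simp add: is_lattice_basis_def)
  then show ?thesis unfolding coeffs_def by (rule someI_ex)
qed

lemma coeffs_ref_edge:
  assumes "k < r"
  shows "coeffs (c0, d0) k = 0"
proof -
  have "(\<lambda>g. \<Sum>k<r. coeffs (c0, d0) k * u k g) = (\<lambda>g. tri_vec (c0, d0) g - tri_vec (c0, d0) g)"
    by (rule coeffs[OF ref_edge, symmetric])
  also have "\<dots> = (\<lambda>g. \<Sum>k<r. 0 * u k g)"
    by simp
  finally show ?thesis by (rule basis_coeff_unique[OF _ assms])
qed

lemma sum_coeffs_basis:
  assumes k: "k < r" and j: "j < r"
  shows "(\<Sum>e\<in>GW. u k e * coeffs e j) = (if j = k then 1 else 0)"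
proof -
  have tri: "tri_vec e g - tri_vec (c0, d0) g = (\<Sum>i<r. coeffs e i * u i g)" if "e \<in> GW" for e g
    using fun_cong[OF coeffs[OF that], of g] by simp
  have "(\<lambda>g. \<Sum>i<r. (\<Sum>e\<in>GW. u k e * coeffs e i) * u i g) = (\<lambda>g. \<Sum>e\<in>GW. u k e * (\<Sum>i<r. coeffs e i * u i g))"
    by (rule ext) (simp add: sum_distrib_left sum_distrib_right sum.swap[of _ GW] mult.assoc)
  also have "\<dots> = (\<lambda>g. \<Sum>e\<in>GW. u k e * (tri_vec e g - tri_vec (c0, d0) g))"
    by (intro ext sum.cong refl) (simp add: tri)
  also have "\<dots> = u k"
    by (rule lattice_expansion[OF basis_in_lattice[OF k] ref_edge, symmetric])
  also have "\<dots> = (\<lambda>g. \<Sum>i<r. (if i = k then 1 else 0) * u i g)"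
  proof
    fix g
    have "(\<Sum>i<r. (if i = k then 1 else 0) * u i g) = (\<Sum>i<r. if i = k then u k g else 0)"
      by (rule sum.cong) auto
    then show "u k g = (\<Sum>i<r. (if i = k then 1 else 0) * u i g)" using k by simp
  qed
  finally show ?thesis by (rule basis_coeff_unique[OF _ j])
qed

definition yratio :: "(nat \<Rightarrow> complex) \<Rightarrow> nat \<Rightarrow> nat \<Rightarrow> complex" where
  "yratio x a b = (ycoord x a - ycoord x b) / (ycoord x c0 - ycoord x d0)"

lemma yratio_nonzero: "x \<in> conf n \<Longrightarrow> a \<in> W \<Longrightarrow> b \<in> W \<Longrightarrow> a \<noteq> b \<Longrightarrow> yratio x a b \<noteq> 0"
  using ycoord_inj[of x] ref_edge_W by (simp add: yratio_def)

definition edge_sign :: "nat \<times> nat \<Rightarrow> complex" where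
  "edge_sign e = orient (fst e) * orient (snd e) * orient c0 * orient d0"

lemma edge_sign_sq: "edge_sign e * edge_sign e = 1"
  using orient_sq[of "fst e"] orient_sq[of "snd e"] orient_sq[of c0] orient_sq[of d0]
  by (simp add: edge_sign_def algebra_simps)

definition edge_laurent :: "nat \<times> nat \<Rightarrow> (nat \<Rightarrow> complex) \<Rightarrow> complex" where
  "edge_laurent e z = edge_sign e * torus_monomial r (coeffs e) z"

lemma laurent_edge_laurent: "edge_laurent e \<in> laurent r"
  unfolding edge_laurent_def[abs_def] by (rule laurent_mult[OF laurent_const laurent_torus_monomial])

lemma edge_laurent_ref_edge: "edge_laurent (c0, d0) z = 1"
  using orient_sq[of c0] orient_sq[of d0]
  by (simp add: edge_laurent_def edge_sign_def torus_monomial_zero coeffs_ref_edge algebra_simps)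

lemma utilde_coeffs:
  assumes e: "e \<in> GW" and x: "x \<in> conf n"
  shows "utilde G (\<lambda>g. tri_vec e g - tri_vec (c0, d0) g) x = edge_sign e * yratio x (fst e) (snd e)"
proof -
  have ratio: "(ycoord x (snd e) - ycoord x (fst e)) / (ycoord x d0 - ycoord x c0) = yratio x (fst e) (snd e)"
    unfolding yratio_def by (metis minus_diff_eq minus_divide_divide)
  have "utilde G (\<lambda>g. tri_vec e g - tri_vec (c0, d0) g) x = utilde G (tri_vec e) x / utilde G (tri_vec (c0, d0)) x"
    by (rule utilde_diff[OF conf_separates_edges[OF x]])
  also have "\<dots> = edge_sign e * ((ycoord x (snd e) - ycoord x (fst e)) / (ycoord x d0 - ycoord x c0))"
    unfolding utilde_tri_vec[OF e x] utilde_tri_vec[OF ref_edge x] edge_sign_def fst_conv snd_conv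
      mult.assoc divide_orient
    by (simp add: ac_simps)
  finally show ?thesis unfolding ratio .
qed

lemma yratio_edge:
  assumes e: "e \<in> GW" and x: "x \<in> conf n"
  shows "yratio x (fst e) (snd e) = edge_laurent e (F x)"
proof -
  have "edge_laurent e (F x) = edge_sign e * utilde G (\<lambda>g. \<Sum>k<r. coeffs e k * u k g) x"
    by (simp add: edge_laurent_def utilde_basis_comb[OF x])
  also have "\<dots> = edge_sign e * (edge_sign e * yratio x (fst e) (snd e))"
    by (simp flip: coeffs[OF e] add: utilde_coeffs[OF e x])
  also have "\<dots> = yratio x (fst e) (snd e)"
    by (simp add: mult.assoc[symmetric] edge_sign_sq)
  finally show ?thesis ..
qed

definition has_laurent_ratio :: "nat \<Rightarrow> bool" where
  "has_laurent_ratio b \<longleftrightarrow> (\<exists>P\<in>laurent r. \<forall>x\<in>conf n. yratio x b c0 = P (F x))"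

lemma has_laurent_ratio_edge:
  assumes e: "e \<in> GW"
  shows "has_laurent_ratio (fst e) \<longleftrightarrow> has_laurent_ratio (snd e)"
proof -
  have split: "yratio x (fst e) c0 = yratio x (snd e) c0 + yratio x (fst e) (snd e)" for x
    by (simp add: yratio_def add_divide_distrib[symmetric])
  show ?thesis
  proof
    assume "has_laurent_ratio (fst e)"
    then obtain P where P: "P \<in> laurent r" "\<forall>x\<in>conf n. yratio x (fst e) c0 = P (F x)"
      unfolding has_laurent_ratio_def by blast
    show "has_laurent_ratio (snd e)"
      unfolding has_laurent_ratio_def
    proof (rule bexI[where x = "\<lambda>z. P z - edge_laurent e z"])
      show "(\<lambda>z. P z - edge_laurent e z) \<in> laurent r"
        by (rule laurent_diff[OF P(1) laurent_edge_laurent])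
      show "\<forall>x\<in>conf n. yratio x (snd e) c0 = P (F x) - edge_laurent e (F x)"
        using P(2) yratio_edge[OF e] split by (simp add: algebra_simps)
    qed
  next
    assume "has_laurent_ratio (snd e)"
    then obtain P where P: "P \<in> laurent r" "\<forall>x\<in>conf n. yratio x (snd e) c0 = P (F x)"
      unfolding has_laurent_ratio_def by blast
    show "has_laurent_ratio (fst e)"
      unfolding has_laurent_ratio_def
    proof (rule bexI[where x = "\<lambda>z. P z + edge_laurent e z"])
      show "(\<lambda>z. P z + edge_laurent e z) \<in> laurent r"
        by (rule laurent_add[OF P(1) laurent_edge_laurent])
      show "\<forall>x\<in>conf n. yratio x (fst e) c0 = P (F x) + edge_laurent e (F x)"
        using P(2) yratio_edge[OF e] split by simp
    qed
  qed
qed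

text \<open>Summing the edge relations along paths in \<open>GW\<close>, which is connected.\<close>
lemma has_laurent_ratio:
  assumes "b \<in> W"
  shows "has_laurent_ratio b"
proof -
  have closed: "\<forall>e\<in>GW. fst e \<in> Collect has_laurent_ratio \<longleftrightarrow> snd e \<in> Collect has_laurent_ratio"
    using has_laurent_ratio_edge by simp
  have "has_laurent_ratio c0"
    unfolding has_laurent_ratio_def using laurent_const[of 0 r] by (auto simp: yratio_def)
  then have "W \<subseteq> Collect has_laurent_ratio"
    using connected[unfolded W_connected_def, THEN spec, THEN mp, OF closed] ref_edge_W by blast
  then show ?thesis using assms by blast
qed

definition vertex_laurent :: "nat \<Rightarrow> (nat \<Rightarrow> complex) \<Rightarrow> complex" where
  "vertex_laurent b = (SOME P. P \<in> laurent r \<and> (\<forall>x\<in>conf n. yratio x b c0 = P (F x)))"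

lemma vertex_laurent:
  assumes "b \<in> W"
  shows "vertex_laurent b \<in> laurent r" "x \<in> conf n \<Longrightarrow> yratio x b c0 = vertex_laurent b (F x)"
proof -
  have "\<exists>P. P \<in> laurent r \<and> (\<forall>x\<in>conf n. yratio x b c0 = P (F x))"
    using has_laurent_ratio[OF assms] unfolding has_laurent_ratio_def by blast
  then have "vertex_laurent b \<in> laurent r \<and> (\<forall>x\<in>conf n. yratio x b c0 = vertex_laurent b (F x))"
    unfolding vertex_laurent_def by (rule someI_ex)
  then show "vertex_laurent b \<in> laurent r" "x \<in> conf n \<Longrightarrow> yratio x b c0 = vertex_laurent b (F x)"
    by auto
qed

definition ratio_laurent :: "nat \<Rightarrow> nat \<Rightarrow> (nat \<Rightarrow> complex) \<Rightarrow> complex" where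
  "ratio_laurent a b z = vertex_laurent a z - vertex_laurent b z"

lemma laurent_ratio_laurent: "a \<in> W \<Longrightarrow> b \<in> W \<Longrightarrow> ratio_laurent a b \<in> laurent r"
  unfolding ratio_laurent_def[abs_def] by (intro laurent_diff vertex_laurent(1))

lemma ratio_laurent_Phi:
  assumes "a \<in> W" "b \<in> W" "x \<in> conf n"
  shows "ratio_laurent a b (F x) = yratio x a b"
proof -
  have "ratio_laurent a b (F x) = yratio x a c0 - yratio x b c0"
    by (simp add: ratio_laurent_def vertex_laurent(2)[OF assms(1,3)] vertex_laurent(2)[OF assms(2,3)])
  also have "\<dots> = yratio x a b"
    by (simp add: yratio_def diff_divide_distrib[symmetric])
  finally show ?thesis .
qed

lemma Phi_eq_imp_mob_equiv:
  assumes x: "x \<in> conf n" and x': "x' \<in> conf n" and eq: "F x = F x'"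
  shows "mob_equiv n x x'"
proof -
  define D where "D y = ycoord y c0 - ycoord y d0" for y
  have D: "D x \<noteq> 0" "D x' \<noteq> 0"
    using ycoord_inj[OF x] ycoord_inj[OF x'] ref_edge_W by (auto simp: D_def)
  have "ycoord x' a = D x' / D x * ycoord x a + (ycoord x' c0 - D x' / D x * ycoord x c0)" if a: "a \<in> W" for a
  proof -
    have "yratio x a c0 = yratio x' a c0"
      using vertex_laurent(2)[OF a x] vertex_laurent(2)[OF a x'] eq by simp
    then show ?thesis using D by (simp add: yratio_def D_def[symmetric] field_simps)
  qed
  moreover have "D x' / D x \<noteq> 0" using D by simp
  ultimately show ?thesis by (rule affine_ycoord_imp_mob_equiv[OF x x', rotated])
qed

lemma Phi_eq_of_monomials:
  assumes x: "x \<in> conf n" and z: "z \<in> torus r"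
    and mono: "\<And>e. e \<in> GW \<Longrightarrow> utilde G (\<lambda>g. tri_vec e g - tri_vec (c0, d0) g) x = torus_monomial r (coeffs e) z"
  shows "F x = z"
proof
  fix k
  show "F x k = z k"
  proof (cases "k < r")
    case k: True
    have "F x k = utilde G (\<lambda>g. \<Sum>e\<in>GW. u k e * (tri_vec e g - tri_vec (c0, d0) g)) x"
      using k lattice_expansion[OF basis_in_lattice[OF k] ref_edge] by (simp add: Phi_def)
    also have "\<dots> = (\<Prod>e\<in>GW. torus_monomial r (coeffs e) z powi u k e)"
      by (simp add: utilde_lin_comb[OF finite_G conf_separates_edges[OF x] finite_GW] mono)
    also have "\<dots> = torus_monomial r (\<lambda>j. \<Sum>e\<in>GW. u k e * coeffs e j) z"
      by (rule prod_power_int_torus_monomial[OF finite_GW z])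
    also have "\<dots> = torus_monomial r (\<lambda>j. if j = k then 1 else 0) z"
      using k by (intro torus_monomial_cong) (simp add: sum_coeffs_basis)
    also have "\<dots> = z k"
      by (rule torus_monomial_unit[OF k])
    finally show ?thesis .
  next
    case False
    then show ?thesis using z by (simp add: Phi_def torus_def)
  qed
qed

definition vandermonde :: "(nat \<Rightarrow> complex) \<Rightarrow> complex" where
  "vandermonde z = (\<Prod>a\<in>W. \<Prod>b\<in>W - {a}. ratio_laurent a b z)"

lemma laurent_vandermonde: "vandermonde \<in> laurent r"
  unfolding vandermonde_def[abs_def]
  by (intro laurent_prod) (auto simp: finite_W intro: laurent_ratio_laurent)

lemma vandermonde_nonzero_iff:
  "vandermonde z \<noteq> 0 \<longleftrightarrow> (\<forall>a\<in>W. \<forall>b\<in>W. a \<noteq> b \<longrightarrow> ratio_laurent a b z \<noteq> 0)"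
  unfolding vandermonde_def using finite_W by (auto simp: prod_zero_iff)

lemma Phi_in_image_set:
  assumes x: "x \<in> conf n"
  shows "F x \<in> torus r" "\<And>e. e \<in> GW \<Longrightarrow> ratio_laurent (fst e) (snd e) (F x) = edge_laurent e (F x)"
    "vandermonde (F x) \<noteq> 0"
  using Phi_torus[OF x] ratio_laurent_Phi[OF _ _ x] yratio_edge[OF _ x] GW_D yratio_nonzero[OF x]
  by (auto simp: vandermonde_nonzero_iff)

text \<open>A point of the image set is hit by the configuration with \<open>x v = 0\<close> whose \<open>ycoord\<close> are
  the values of \<open>vertex_laurent\<close>, shifted by a constant avoiding all of them.\<close>
lemma image_set_in_Phi_image:
  assumes z: "z \<in> torus r" and eqs: "\<And>e. e \<in> GW \<Longrightarrow> ratio_laurent (fst e) (snd e) z = edge_laurent e z"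
    and vdm: "vandermonde z \<noteq> 0"
  shows "z \<in> F ` conf n"
proof -
  obtain t :: complex where t: "t \<notin> (\<lambda>a. vertex_laurent a z) ` W"
    using ex_new_if_finite[OF infinite_UNIV_char_0] finite_W by blast
  then have t_ne: "vertex_laurent a z - t \<noteq> 0" if "a \<in> W" for a using that by force
  define x where "x i = (if i \<in> W then 1 / (vertex_laurent i z - t) else 0)" for i
  have distinct: "vertex_laurent a z \<noteq> vertex_laurent b z" if "a \<in> W" "b \<in> W" "a \<noteq> b" for a b
    using vdm that by (auto simp: vandermonde_nonzero_iff ratio_laurent_def)
  have x: "x \<in> conf n"
    unfolding conf_def
  proof (intro CollectI conjI allI impI)
    fix i j assume "i < n" "j < n" "i \<noteq> j"
    then show "x i \<noteq> x j"
      using distinct t_ne by (auto simp: x_def W_iff field_simps)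
  next
    fix i assume "n \<le> i"
    then show "x i = 0" by (simp add: x_def W_iff)
  qed
  have y: "ycoord x a = vertex_laurent a z - t" if "a \<in> W" for a
    using that t_ne v_notin_W by (simp add: ycoord_def x_def)
  have "utilde G (\<lambda>g. tri_vec e g - tri_vec (c0, d0) g) x = torus_monomial r (coeffs e) z" if e: "e \<in> GW" for e
  proof -
    have "yratio x (fst e) (snd e) = ratio_laurent (fst e) (snd e) z / ratio_laurent c0 d0 z"
      using GW_D[OF e] ref_edge_W by (simp add: yratio_def y ratio_laurent_def)
    also have "\<dots> = edge_laurent e z"
      using eqs[OF e] eqs[OF ref_edge] by (simp add: edge_laurent_ref_edge)
    finally have "edge_sign e * yratio x (fst e) (snd e) = edge_sign e * edge_sign e * torus_monomial r (coeffs e) z"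
      by (simp add: edge_laurent_def)
    also have "edge_sign e * edge_sign e = 1" by (rule edge_sign_sq)
    finally show ?thesis by (simp add: utilde_coeffs[OF e x])
  qed
  then have "F x = z" by (rule Phi_eq_of_monomials[OF x z])
  then show ?thesis using x by blast
qed

lemma Phi_image:
  "F ` conf n = {z \<in> torus r. (\<forall>e\<in>GW. ratio_laurent (fst e) (snd e) z = edge_laurent e z) \<and> vandermonde z \<noteq> 0}"
  using Phi_in_image_set image_set_in_Phi_image by blast

lemma Phi_image_locally_closed: "locally_closed_in_torus r (F ` conf n)"
proof -
  have "\<exists>p. p \<in> polyfun \<and> (\<forall>z\<in>torus r. ratio_laurent (fst e) (snd e) z - edge_laurent e z = 0 \<longleftrightarrow> p z = 0)"
    if "e \<in> GW" for e
    using GW_D[OF that] laurent_zero_set_polyfun[OF laurent_diff[OF laurent_ratio_laurent laurent_edge_laurent]]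
    by metis
  then obtain pe where pe: "\<And>e. e \<in> GW \<Longrightarrow> pe e \<in> polyfun"
    "\<And>e z. e \<in> GW \<Longrightarrow> z \<in> torus r \<Longrightarrow> ratio_laurent (fst e) (snd e) z = edge_laurent e z \<longleftrightarrow> pe e z = 0"
    by (metis right_minus_eq)
  obtain ph where ph: "ph \<in> polyfun" "\<And>z. z \<in> torus r \<Longrightarrow> vandermonde z = 0 \<longleftrightarrow> ph z = 0"
    using laurent_zero_set_polyfun[OF laurent_vandermonde] by blast
  have "F ` conf n = {z \<in> torus r. (\<forall>f\<in>pe ` GW. f z = 0) \<and> (\<exists>h\<in>{ph}. h z \<noteq> 0)}"
    unfolding Phi_image using pe(2) ph(2) by auto
  moreover have "pe ` GW \<subseteq> polyfun" using pe(1) by blast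
  ultimately show ?thesis
    unfolding locally_closed_in_torus_def using ph(1) by blast
qed

definition laurent_quotient :: "((nat \<Rightarrow> complex) \<Rightarrow> complex) \<Rightarrow> bool" where
  "laurent_quotient f \<longleftrightarrow> (\<exists>A\<in>laurent r. \<exists>B\<in>laurent r. \<forall>x\<in>conf n. f x * B (F x) = A (F x) \<and> B (F x) \<noteq> 0)"

lemma laurent_quotient_cross_ratio_v:
  assumes W: "i \<in> W" "j \<in> W" "k \<in> W" and d: "distinct [i, j, k]"
  shows "laurent_quotient (cross_ratio i j k v)"
  unfolding laurent_quotient_def
proof (rule bexI[where x = "ratio_laurent i k"], rule bexI[where x = "ratio_laurent j k"], intro ballI conjI)
  fix x assume x: "x \<in> conf n"
  have "ycoord x j - ycoord x k \<noteq> 0" "ycoord x c0 - ycoord x d0 \<noteq> 0"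
    using ycoord_inj[OF x] W d ref_edge_W by auto
  then show "cross_ratio i j k v x * ratio_laurent j k (F x) = ratio_laurent i k (F x)"
    unfolding cross_ratio_ycoord_v[OF x W d] ratio_laurent_Phi[OF W(2,3) x] ratio_laurent_Phi[OF W(1,3) x]
    by (simp add: yratio_def)
  show "ratio_laurent j k (F x) \<noteq> 0"
    using ratio_laurent_Phi[OF W(2,3) x] yratio_nonzero[OF x W(2,3)] d by simp
qed (use W in \<open>simp_all add: laurent_ratio_laurent\<close>)

lemma laurent_quotient_cross_ratio_W:
  assumes W: "i \<in> W" "j \<in> W" "k \<in> W" "l \<in> W" and d: "distinct [i, j, k, l]"
  shows "laurent_quotient (cross_ratio i j k l)"
  unfolding laurent_quotient_def
proof (rule bexI[where x = "\<lambda>z. ratio_laurent i k z * ratio_laurent j l z"],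
    rule bexI[where x = "\<lambda>z. ratio_laurent i l z * ratio_laurent j k z"], intro ballI conjI)
  fix x assume x: "x \<in> conf n"
  have "ycoord x i - ycoord x l \<noteq> 0" "ycoord x j - ycoord x k \<noteq> 0" "ycoord x c0 - ycoord x d0 \<noteq> 0"
    using ycoord_inj[OF x] W d ref_edge_W by auto
  then show "cross_ratio i j k l x * (ratio_laurent i l (F x) * ratio_laurent j k (F x)) =
      ratio_laurent i k (F x) * ratio_laurent j l (F x)"
    unfolding cross_ratio_ycoord[OF x W d] ratio_laurent_Phi[OF _ _ x, OF W(1,4)]
      ratio_laurent_Phi[OF _ _ x, OF W(2,3)] ratio_laurent_Phi[OF _ _ x, OF W(1,3)]
      ratio_laurent_Phi[OF _ _ x, OF W(2,4)]
    by (simp add: yratio_def)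
  show "ratio_laurent i l (F x) * ratio_laurent j k (F x) \<noteq> 0"
    using ratio_laurent_Phi[OF W(1,4) x] ratio_laurent_Phi[OF W(2,3) x]
      yratio_nonzero[OF x W(1,4)] yratio_nonzero[OF x W(2,3)] d by simp
qed (use W in \<open>intro laurent_mult laurent_ratio_laurent; simp\<close>)+

text \<open>The Klein four-group symmetry moves \<open>v\<close>, if it occurs, to the last position.\<close>
lemma laurent_quotient_cross_ratio:
  assumes ijkl: "i < n" "j < n" "k < n" "l < n" "distinct [i, j, k, l]"
  shows "laurent_quotient (cross_ratio i j k l)"
proof (cases "v \<in> {i, j, k, l}")
  case False
  then have "i \<in> W" "j \<in> W" "k \<in> W" "l \<in> W" using ijkl by (auto simp: W_iff)
  then show ?thesis by (rule laurent_quotient_cross_ratio_W[OF _ _ _ _ ijkl(5)])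
next
  case True
  then consider "i = v" | "j = v" | "k = v" | "l = v" by auto
  then show ?thesis
  proof cases
    case 1
    then show ?thesis using laurent_quotient_cross_ratio_v[of l k j] ijkl
      by (simp add: W_iff cross_ratio_klein(3)[of v j k l])
  next
    case 2
    then show ?thesis using laurent_quotient_cross_ratio_v[of k l i] ijkl
      by (simp add: W_iff cross_ratio_klein(2)[of i v k l])
  next
    case 3
    then show ?thesis using laurent_quotient_cross_ratio_v[of j i l] ijkl
      by (simp add: W_iff cross_ratio_klein(1)[of i j v l])
  next
    case 4
    then show ?thesis using laurent_quotient_cross_ratio_v[of i j k] ijkl
      by (simp add: W_iff)
  qed
qed

lemma Phi_embedding: "embedding_M0n n r F"
  unfolding embedding_M0n_def
proof (intro conjI)
  show "\<forall>x\<in>conf n. \<forall>y\<in>conf n. F x = F y \<longrightarrow> mob_equiv n x y"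
    using Phi_eq_imp_mob_equiv by blast
  show "locally_closed_in_torus r (F ` conf n)"
    by (rule Phi_image_locally_closed)
  show "\<forall>i j k l. i < n \<longrightarrow> j < n \<longrightarrow> k < n \<longrightarrow> l < n \<longrightarrow> distinct [i, j, k, l] \<longrightarrow>
      (\<forall>z\<in>F ` conf n. \<exists>p\<in>polyfun. \<exists>q\<in>polyfun. q z \<noteq> 0 \<and>
        (\<forall>x\<in>conf n. q (F x) \<noteq> 0 \<longrightarrow> cross_ratio i j k l x * q (F x) = p (F x)))"
  proof (intro allI impI ballI)
    fix i j k l z
    assume ijkl: "i < n" "j < n" "k < n" "l < n" "distinct [i, j, k, l]" and z: "z \<in> F ` conf n"
    obtain A B where AB: "A \<in> laurent r" "B \<in> laurent r"
      "\<And>x. x \<in> conf n \<Longrightarrow> cross_ratio i j k l x * B (F x) = A (F x) \<and> B (F x) \<noteq> 0"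
      using laurent_quotient_cross_ratio[OF ijkl] unfolding laurent_quotient_def by blast
    obtain p q where pq: "p \<in> polyfun" "q \<in> polyfun"
      "\<And>x. x \<in> conf n \<Longrightarrow> cross_ratio i j k l x * q (F x) = p (F x) \<and> q (F x) \<noteq> 0"
      using laurent_quotient_imp_polyfun_quotient[where X = "conf n" and F = "Phi G r u",
          OF AB(1,2) Phi_torus AB(3)[THEN conjunct1] AB(3)[THEN conjunct2]]
      by blast
    obtain x0 where "x0 \<in> conf n" "z = F x0" using z by blast
    then show "\<exists>p\<in>polyfun. \<exists>q\<in>polyfun. q z \<noteq> 0 \<and>
        (\<forall>x\<in>conf n. q (F x) \<noteq> 0 \<longrightarrow> cross_ratio i j k l x * q (F x) = p (F x))"
      using pq by blast
  qed
qed

end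

theorem mainTheorem14:
  fixes n :: nat and G :: "(nat \<times> nat) set"
  assumes "n \<ge> 4"
    and "simple_graph n G"
    and "copious n G"
    and "\<exists>v. universal_vertex n G v"
  shows "top_copious n G"
proof -
  obtain v where v: "universal_vertex n G v" using assms(4) by blast
  interpret universal_vertex_graph n G v using assms(1,2) v by unfold_locales
  have connected: W_connected by (rule copious_imp_W_connected[OF assms(3)])
  then obtain e where e: "e \<in> GW" using GW_nonempty by blast
  show ?thesis
    unfolding top_copious_def
  proof (intro allI impI)
    fix r u assume "is_lattice_basis n G r u"
    then interpret universal_vertex_lattice_basis n G v r u "fst e" "snd e"
      using e connected by unfold_locales simp_all
    show "embedding_M0n n r (Phi G r u)" by (rule Phi_embedding)
  qed
qed

end
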